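(* Let $F$ be a $C^1$ function and let $\vec\Phi$ be a (sufficiently regular) conformal immersion of a domain of $\mathbb R^2$ into $\mathbb R^3$ with conformal factor $\lambda$. (i) If $\vec\Phi$ is a critical point of $\mathcal W_F=\int F(H^2)\,d\mathrm{vol}_g$, then $$\mathrm{div}\Big[F(H^2)\nabla\vec\Phi+HF'(H^2)\nabla\vec n-\vec n\,\nabla\big(HF'(H^2)\big)\Big]=0.$$ (ii) If $\vec\Phi$ is a critical point of $\mathcal E_F=\int F(|A|^2)\,d\mathrm{vol}_g$, then, writing $F=F(|A|^2)$, $F'=F'(|A|^2)$, $$\mathrm{div}\Big[F\nabla\vec\Phi-2e^{-2\lambda}F'\sum_{j=1}^2(\nabla\vec n\cdot\partial_{x_j}\vec n)\,\partial_{x_j}\vec\Phi+2e^{-2\lambda}\vec n\,\big(\mathrm{div}(F'\nabla\vec n)\cdot\nabla\vec\Phi\big)\Big]=0.$$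
   Context: Conformal: $\partial_{x_i}\vec\Phi\cdot\partial_{x_j}\vec\Phi=e^{2\lambda}\delta_{ij}$. $\nabla,\mathrm{div}$ are flat operators in $(x_1,x_2)$. $\vec n$ is the unit normal, $H$ the scalar mean curvature with $\Delta\vec\Phi=2e^{2\lambda}H\vec n$, $|A|^2=e^{-2\lambda}|\nabla\vec n|^2$. $F'(s)=dF/ds$. In (ii), $\mathrm{div}(F'\nabla\vec n)\cdot\nabla\vec\Phi$ denotes the vector field $\big(\mathrm{div}(F'\nabla\vec n)\cdot\partial_{x_1}\vec\Phi,\ \mathrm{div}(F'\nabla\vec n)\cdot\partial_{x_2}\vec\Phi\big)$, and $\nabla\vec n\cdot\partial_{x_j}\vec n$ the vector field $(\partial_{x_1}\vec n\cdot\partial_{x_j}\vec n,\partial_{x_2}\vec n\cdot\partial_{x_j}\vec n)$. The equations hold in the sense of distributions. *)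

theory Defs
  imports "HOL-Analysis.Analysis" "HOL-Analysis.Cross3"
begin

definition pd :: "2 \<Rightarrow> (real^2 \<Rightarrow> 'b::real_normed_vector) \<Rightarrow> real^2 \<Rightarrow> 'b" where
  "pd i f p = frechet_derivative f (at p) (axis i 1)"

fun Ck :: "nat \<Rightarrow> (real^2) set \<Rightarrow> (real^2 \<Rightarrow> 'b::real_normed_vector) \<Rightarrow> bool" where
  "Ck 0 U f = continuous_on U f"
| "Ck (Suc k) U f = ((\<forall>p\<in>U. f differentiable (at p)) \<and> (\<forall>i. Ck k U (pd i f)))"

definition smooth_on :: "(real^2) set \<Rightarrow> (real^2 \<Rightarrow> 'b::real_normed_vector) \<Rightarrow> bool" where
  "smooth_on U f = (\<forall>k. Ck k U f)"

definition test_fn :: "(real^2) set \<Rightarrow> (real^2 \<Rightarrow> real) \<Rightarrow> bool" where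
  "test_fn U \<phi> = (smooth_on UNIV \<phi> \<and>
     (\<exists>K. compact K \<and> K \<subseteq> U \<and> (\<forall>p. p \<notin> K \<longrightarrow> \<phi> p = 0)))"

definition regd :: "(real^2) set \<Rightarrow> (real^2 \<Rightarrow> 'b::euclidean_space) \<Rightarrow> (real^2 \<Rightarrow> real) \<Rightarrow> 'b" where
  "regd U f = (\<lambda>\<phi>. integral U (\<lambda>p. \<phi> p *\<^sub>R f p))"

definition dpd :: "2 \<Rightarrow> ((real^2 \<Rightarrow> real) \<Rightarrow> 'b::real_normed_vector) \<Rightarrow> (real^2 \<Rightarrow> real) \<Rightarrow> 'b" where
  "dpd i T = (\<lambda>\<phi>. - T (pd i \<phi>))"

definition vmul :: "(real^2 \<Rightarrow> real^3) \<Rightarrow> ((real^2 \<Rightarrow> real) \<Rightarrow> real) \<Rightarrow> (real^2 \<Rightarrow> real) \<Rightarrow> real^3" where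
  "vmul a S = (\<lambda>\<phi>. \<chi> c. S (\<lambda>p. a p $ c * \<phi> p))"

definition vdot :: "((real^2 \<Rightarrow> real) \<Rightarrow> real^3) \<Rightarrow> (real^2 \<Rightarrow> real^3) \<Rightarrow> (real^2 \<Rightarrow> real) \<Rightarrow> real" where
  "vdot D v = (\<lambda>\<phi>. \<Sum>c\<in>UNIV. D (\<lambda>p. v p $ c * \<phi> p) $ c)"

definition gmat :: "(real^2 \<Rightarrow> real^3) \<Rightarrow> real^2 \<Rightarrow> real^2^2" where
  "gmat \<Psi> p = (\<chi> i j. pd i \<Psi> p \<bullet> pd j \<Psi> p)"

definition nrm :: "(real^2 \<Rightarrow> real^3) \<Rightarrow> real^2 \<Rightarrow> real^3" where
  "nrm \<Psi> p = (1 / norm (cross3 (pd 1 \<Psi> p) (pd 2 \<Psi> p))) *\<^sub>R cross3 (pd 1 \<Psi> p) (pd 2 \<Psi> p)"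

definition area :: "(real^2 \<Rightarrow> real^3) \<Rightarrow> real^2 \<Rightarrow> real" where
  "area \<Psi> p = norm (cross3 (pd 1 \<Psi> p) (pd 2 \<Psi> p))"

definition sff :: "(real^2 \<Rightarrow> real^3) \<Rightarrow> 2 \<Rightarrow> 2 \<Rightarrow> real^2 \<Rightarrow> real" where
  "sff \<Psi> i j p = pd i (pd j \<Psi>) p \<bullet> nrm \<Psi> p"

text \<open>Scalar mean curvature H = (1/2) g^{ij} h_ij (so Delta Phi = 2 e^{2 lambda} H n in conformal coordinates).\<close>
definition mcurv :: "(real^2 \<Rightarrow> real^3) \<Rightarrow> real^2 \<Rightarrow> real" where
  "mcurv \<Psi> p = (1/2) * (\<Sum>i\<in>UNIV. \<Sum>j\<in>UNIV. matrix_inv (gmat \<Psi> p) $ i $ j * sff \<Psi> i j p)"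

definition sqA :: "(real^2 \<Rightarrow> real^3) \<Rightarrow> real^2 \<Rightarrow> real" where
  "sqA \<Psi> p = (\<Sum>i\<in>UNIV. \<Sum>j\<in>UNIV. \<Sum>k\<in>UNIV. \<Sum>l\<in>UNIV.
      matrix_inv (gmat \<Psi> p) $ i $ k * matrix_inv (gmat \<Psi> p) $ j $ l * sff \<Psi> i j p * sff \<Psi> k l p)"

definition WF :: "(real \<Rightarrow> real) \<Rightarrow> (real^2 \<Rightarrow> real^3) \<Rightarrow> (real^2) set \<Rightarrow> real" where
  "WF F \<Psi> K = integral K (\<lambda>p. F ((mcurv \<Psi> p)\<^sup>2) * area \<Psi> p)"

definition EF :: "(real \<Rightarrow> real) \<Rightarrow> (real^2 \<Rightarrow> real^3) \<Rightarrow> (real^2) set \<Rightarrow> real" where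
  "EF F \<Psi> K = integral K (\<lambda>p. F (sqA \<Psi> p) * area \<Psi> p)"

definition critical :: "((real^2 \<Rightarrow> real^3) \<Rightarrow> (real^2) set \<Rightarrow> real) \<Rightarrow> (real^2) set \<Rightarrow> (real^2 \<Rightarrow> real^3) \<Rightarrow> bool" where
  "critical J U \<Phi> = (\<forall>w K. smooth_on UNIV w \<and> compact K \<and> K \<subseteq> U \<and> (\<forall>p. p \<notin> K \<longrightarrow> w p = 0) \<longrightarrow>
      ((\<lambda>t. J (\<lambda>p. \<Phi> p + t *\<^sub>R w p) K) has_real_derivative 0) (at 0))"

text \<open>(i): div [ F(H^2) grad Phi + H F'(H^2) grad n - n grad (H F'(H^2)) ].\<close>
definition div_W :: "(real^2) set \<Rightarrow> (real \<Rightarrow> real) \<Rightarrow> (real \<Rightarrow> real) \<Rightarrow> (real^2 \<Rightarrow> real^3) \<Rightarrow> (real^2 \<Rightarrow> real) \<Rightarrow> real^3" where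
  "div_W U F F' \<Phi> = (let H = mcurv \<Phi>; n = nrm \<Phi>; f = (\<lambda>p. H p * F' ((H p)\<^sup>2));
     V = (\<lambda>i \<phi>. regd U (\<lambda>p. F ((H p)\<^sup>2) *\<^sub>R pd i \<Phi> p + f p *\<^sub>R pd i n p) \<phi>
                 - vmul n (dpd i (regd U f)) \<phi>)
   in (\<lambda>\<phi>. \<Sum>i\<in>UNIV. dpd i (V i) \<phi>))"

text \<open>(ii): div [ F grad Phi - 2 e^{-2 lambda} F' sum_j (grad n . d_j n) d_j Phi
                 + 2 e^{-2 lambda} n (div(F' grad n) . grad Phi) ], F = F(|A|^2), F' = F'(|A|^2).\<close>
definition div_E :: "(real^2) set \<Rightarrow> (real \<Rightarrow> real) \<Rightarrow> (real \<Rightarrow> real) \<Rightarrow> (real^2 \<Rightarrow> real^3) \<Rightarrow> (real^2 \<Rightarrow> real) \<Rightarrow> (real^2 \<Rightarrow> real) \<Rightarrow> real^3" where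
  "div_E U F F' \<Phi> lam = (let A2 = sqA \<Phi>; n = nrm \<Phi>;
     D = (\<lambda>\<phi>. \<Sum>k\<in>UNIV. dpd k (regd U (\<lambda>p. F' (A2 p) *\<^sub>R pd k n p)) \<phi>);
     V = (\<lambda>i \<phi>. regd U (\<lambda>p. F (A2 p) *\<^sub>R pd i \<Phi> p
                  - (2 * exp (-2 * lam p) * F' (A2 p)) *\<^sub>R
                      (\<Sum>j\<in>UNIV. (pd i n p \<bullet> pd j n p) *\<^sub>R pd j \<Phi> p)) \<phi>
                 + vmul (\<lambda>p. (2 * exp (-2 * lam p)) *\<^sub>R n p) (vdot D (pd i \<Phi>)) \<phi>)
   in (\<lambda>\<phi>. \<Sum>i\<in>UNIV. dpd i (V i) \<phi>))"

end

theory Submission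
  imports Defs
begin

text \<open>Both integrands, \<open>F(H\<^sup>2) |\<Phi>\<^sub>1 \<times> \<Phi>\<^sub>2|\<close> and \<open>F(|A|\<^sup>2) |\<Phi>\<^sub>1 \<times> \<Phi>\<^sub>2|\<close>, are explicit functions of
  the 2-jet of the immersion.  Varying \<open>\<Phi>\<close> by \<open>t \<phi> e\<close> (\<open>\<phi>\<close> a test function, \<open>e\<close> a constant vector)
  and differentiating under the integral sign expresses the first variation as the integral of an
  explicit function of the jets of \<open>\<Phi>\<close> and \<open>\<phi> e\<close>.  At a point of a conformal immersion this function
  simplifies in the frame \<open>(\<Phi>\<^sub>1, \<Phi>\<^sub>2, n)\<close>, by the Weingarten equations and the derivatives of the
  conformality relations, to exactly the integrand obtained by applying the \<open>e\<close>-component of the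
  distributional divergence to \<open>\<phi>\<close>.  So at a critical point every component of the divergence
  vanishes on every test function.\<close>

section \<open>Partial derivatives\<close>

lemma has_derivative_frechet_derivative:
  "f differentiable at p \<Longrightarrow> (f has_derivative frechet_derivative f (at p)) (at p)"
  using frechet_derivative_works by blast

lemma pd_eq: "(f has_derivative f') (at p) \<Longrightarrow> pd i f p = f' (axis i 1)"
  unfolding pd_def using frechet_derivative_at by metis

lemma pd_cong_open:
  assumes "open S" "p \<in> S" "\<And>x. x \<in> S \<Longrightarrow> f x = g x"
  shows "pd i f p = pd i g p"
proof -
  have "(f has_derivative f') (at p) \<longleftrightarrow> (g has_derivative f') (at p)" for f'
    using has_derivative_transform_within_open[OF _ assms(1,2)] assms(3) by metis
  then show ?thesis unfolding pd_def frechet_derivative_def by simp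
qed

lemma pd_const: "pd i (\<lambda>x. c) p = 0"
  by (subst pd_eq[OF has_derivative_const]) simp

lemma pd_eq_0_outside_compact:
  assumes "compact K" "p \<notin> K" "\<And>q. q \<notin> K \<Longrightarrow> g q = 0"
  shows "pd i g p = 0"
proof -
  have "open (- K)" using assms(1) compact_imp_closed by blast
  then have "pd i g p = pd i (\<lambda>q. 0) p" by (rule pd_cong_open) (use assms in auto)
  then show ?thesis by (simp add: pd_const)
qed

lemma pd_add:
  assumes "f differentiable at p" "g differentiable at p"
  shows "pd i (\<lambda>x. f x + g x) p = pd i f p + pd i g p"
  by (subst pd_eq[OF has_derivative_add[OF has_derivative_frechet_derivative[OF assms(1)]
        has_derivative_frechet_derivative[OF assms(2)]]]) (simp add: pd_def)

lemma pd_mult: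
  assumes "f differentiable at p" "g differentiable at p"
  shows "pd i (\<lambda>x. f x * g x :: real) p = f p * pd i g p + pd i f p * g p"
  by (subst pd_eq[OF has_derivative_mult[OF has_derivative_frechet_derivative[OF assms(1)]
        has_derivative_frechet_derivative[OF assms(2)]]]) (simp add: pd_def)

lemma pd_inner:
  assumes "f differentiable at p" "g differentiable at p"
  shows "pd i (\<lambda>x. f x \<bullet> g x) p = f p \<bullet> pd i g p + pd i f p \<bullet> g p"
  by (subst pd_eq[OF has_derivative_inner[OF has_derivative_frechet_derivative[OF assms(1)]
        has_derivative_frechet_derivative[OF assms(2)]]]) (simp add: pd_def)

lemma pd_scaleR_right:
  "g differentiable at p \<Longrightarrow> pd i (\<lambda>x. c *\<^sub>R g x) p = c *\<^sub>R pd i g p"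
  by (subst pd_eq[OF has_derivative_scaleR_right[OF has_derivative_frechet_derivative]]) (auto simp: pd_def)

lemma pd_scaleR_left:
  "f differentiable at p \<Longrightarrow> pd i (\<lambda>x. f x *\<^sub>R v) p = pd i f p *\<^sub>R v"
  by (subst pd_eq[OF has_derivative_scaleR_left[OF has_derivative_frechet_derivative]]) (auto simp: pd_def)

lemma pd_vec_nth: "f differentiable at p \<Longrightarrow> pd i (\<lambda>x. f x $ c) p = pd i f p $ c"
  by (subst pd_eq[OF bounded_linear.has_derivative[OF bounded_linear_vec_nth
        has_derivative_frechet_derivative]]) (auto simp: pd_def)

lemma pd_chain:
  assumes "f differentiable at p" "(h has_real_derivative h') (at (f p))"
  shows "pd i (\<lambda>x. h (f x)) p = h' * pd i f p"
proof -
  have "((\<lambda>x. h (f x)) has_derivative (\<lambda>y. h' * frechet_derivative f (at p) y)) (at p)"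
    using has_derivative_compose[OF has_derivative_frechet_derivative[OF assms(1)]
        assms(2)[unfolded has_field_derivative_def]] by (simp add: mult.commute)
  then show ?thesis by (subst pd_eq) (auto simp: pd_def)
qed

lemma differentiable_vec_nth: "f differentiable at p \<Longrightarrow> (\<lambda>x. f x $ c) differentiable at p"
  unfolding differentiable_def using bounded_linear.has_derivative[OF bounded_linear_vec_nth] by blast

lemma differentiable_scaleR_left: "f differentiable at p \<Longrightarrow> (\<lambda>x. f x *\<^sub>R v) differentiable at p"
  unfolding differentiable_def using has_derivative_scaleR_left by blast

lemma bounded_bilinear_cross3: "bounded_bilinear cross3"
  using bilinear_cross bilinear_conv_bounded_bilinear by blast

lemma differentiable_cross3:
  "f differentiable at p \<Longrightarrow> g differentiable at p \<Longrightarrow> (\<lambda>x. cross3 (f x) (g x)) differentiable at p"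
  unfolding differentiable_def using bounded_bilinear.FDERIV[OF bounded_bilinear_cross3] by blast

lemma has_real_derivative_along_axis:
  fixes g :: "real^2 \<Rightarrow> real"
  assumes "g differentiable at (a + s *\<^sub>R axis i 1)"
  shows "((\<lambda>s. g (a + s *\<^sub>R axis i 1)) has_real_derivative pd i g (a + s *\<^sub>R axis i 1)) (at s)"
proof -
  let ?x = "a + s *\<^sub>R axis i 1"
  have "((\<lambda>s. a + s *\<^sub>R axis i 1) has_derivative (\<lambda>h. h *\<^sub>R axis i 1)) (at s)"
    by (auto intro!: derivative_eq_intros)
  from has_derivative_compose[OF this has_derivative_frechet_derivative[OF assms]]
  have "((\<lambda>s. g (a + s *\<^sub>R axis i 1)) has_derivative (\<lambda>h. h * frechet_derivative g (at ?x) (axis i 1))) (at s)"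
    using has_derivative_linear[OF has_derivative_frechet_derivative[OF assms]] by (simp add: linear_scale)
  then have "((\<lambda>s. g (a + s *\<^sub>R axis i 1)) has_derivative (\<lambda>h. pd i g ?x * h)) (at s)"
    by (simp add: pd_def mult.commute)
  then show ?thesis unfolding has_field_derivative_def by simp
qed

lemma norm_axis_sum_le: "norm (s *\<^sub>R axis i (1::real) + t *\<^sub>R axis j 1 :: real^2) \<le> \<bar>s\<bar> + \<bar>t\<bar>"
  using norm_triangle_ineq[of "s *\<^sub>R axis i (1::real)" "t *\<^sub>R axis j 1 :: real^2"] by simp

lemma second_difference_mean_value:
  fixes f :: "real^2 \<Rightarrow> real"
  assumes "ball p r \<subseteq> U" "\<And>x. x \<in> U \<Longrightarrow> f differentiable at x"
    "\<And>x. x \<in> U \<Longrightarrow> pd i f differentiable at x"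
    "0 < h" "2 * h < r"
  shows "\<exists>s t. 0 < s \<and> s < h \<and> 0 < t \<and> t < h \<and>
    f (p + h *\<^sub>R axis i 1 + h *\<^sub>R axis j 1) - f (p + h *\<^sub>R axis i 1) - f (p + h *\<^sub>R axis j 1) + f p
     = h * h * pd j (pd i f) (p + s *\<^sub>R axis i 1 + t *\<^sub>R axis j 1)"
proof -
  have inU: "p + s *\<^sub>R axis i 1 + t *\<^sub>R axis j 1 \<in> U" if "0 \<le> s" "s \<le> h" "0 \<le> t" "t \<le> h" for s t
  proof -
    have "norm (s *\<^sub>R axis i (1::real) + t *\<^sub>R axis j 1 :: real^2) < r"
      using norm_axis_sum_le[of s i t j] that assms(5) by linarith
    moreover have "dist p (p + v) = norm v" for v :: "real^2" by (simp add: dist_norm norm_minus_commute)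
    ultimately have "p + s *\<^sub>R axis i 1 + t *\<^sub>R axis j 1 \<in> ball p r"
      by (simp add: add.assoc)
    then show ?thesis using assms(1) by blast
  qed
  define \<phi> where "\<phi> s = f ((p + h *\<^sub>R axis j 1) + s *\<^sub>R axis i 1) - f (p + s *\<^sub>R axis i 1)" for s
  have d\<phi>: "(\<phi> has_real_derivative (pd i f ((p + h *\<^sub>R axis j 1) + s *\<^sub>R axis i 1) - pd i f (p + s *\<^sub>R axis i 1))) (at s)"
    if "0 \<le> s" "s \<le> h" for s
    unfolding \<phi>_def
  proof (intro derivative_intros has_real_derivative_along_axis)
    show "f differentiable at (p + h *\<^sub>R axis j 1 + s *\<^sub>R axis i 1)"
      using inU[of s h] that assms(2,4) by (simp add: add_ac)
    show "f differentiable at (p + s *\<^sub>R axis i 1)"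
      using inU[of s 0] that assms(2,4) by simp
  qed
  obtain s where s: "0 < s" "s < h" "\<phi> h - \<phi> 0 = (h - 0) * (pd i f ((p + h *\<^sub>R axis j 1) + s *\<^sub>R axis i 1) - pd i f (p + s *\<^sub>R axis i 1))"
    using MVT2[OF assms(4) d\<phi>] by auto
  define \<psi> where "\<psi> t = pd i f ((p + s *\<^sub>R axis i 1) + t *\<^sub>R axis j 1)" for t
  have d\<psi>: "(\<psi> has_real_derivative pd j (pd i f) ((p + s *\<^sub>R axis i 1) + t *\<^sub>R axis j 1)) (at t)"
    if "0 \<le> t" "t \<le> h" for t
    unfolding \<psi>_def using inU[of s t] that s assms(3) by (intro has_real_derivative_along_axis) auto
  obtain t where t: "0 < t" "t < h" "\<psi> h - \<psi> 0 = (h - 0) * pd j (pd i f) ((p + s *\<^sub>R axis i 1) + t *\<^sub>R axis j 1)"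
    using MVT2[OF assms(4) d\<psi>] by auto
  have "f (p + h *\<^sub>R axis i 1 + h *\<^sub>R axis j 1) - f (p + h *\<^sub>R axis i 1) - f (p + h *\<^sub>R axis j 1) + f p
      = \<phi> h - \<phi> 0" unfolding \<phi>_def by (simp add: add_ac)
  also have "\<dots> = h * (\<psi> h - \<psi> 0)" using s(3) unfolding \<psi>_def by (simp add: add_ac)
  also have "\<dots> = h * h * pd j (pd i f) (p + s *\<^sub>R axis i 1 + t *\<^sub>R axis j 1)" using t(3) by simp
  finally show ?thesis using s t by blast
qed

text \<open>Schwarz's theorem: both mixed partials are limits of the same second difference quotient.\<close>

lemma pd_commute:
  fixes f :: "real^2 \<Rightarrow> real"
  assumes "open U" "p \<in> U" "\<And>x. x \<in> U \<Longrightarrow> f differentiable at x"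
    "\<And>x i. x \<in> U \<Longrightarrow> pd i f differentiable at x"
    "\<And>i j. continuous_on U (pd i (pd j f))"
  shows "pd 1 (pd 2 f) p = pd 2 (pd 1 f) p"
proof (rule ccontr)
  assume ne: "pd 1 (pd 2 f) p \<noteq> pd 2 (pd 1 f) p"
  define e where "e = \<bar>pd 1 (pd 2 f) p - pd 2 (pd 1 f) p\<bar> / 2"
  have e: "e > 0" using ne by (simp add: e_def)
  obtain r where r: "r > 0" "ball p r \<subseteq> U" using assms(1,2) open_contains_ball by blast
  have c1: "isCont (pd 1 (pd 2 f)) p" and c2: "isCont (pd 2 (pd 1 f)) p"
    using assms(1,2,5) continuous_on_interior interior_open by metis+
  obtain d1 where d1: "d1 > 0" "\<And>z. dist z p < d1 \<Longrightarrow> dist (pd 1 (pd 2 f) z) (pd 1 (pd 2 f) p) < e"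
    using c1 e unfolding continuous_at_eps_delta by blast
  obtain d2 where d2: "d2 > 0" "\<And>z. dist z p < d2 \<Longrightarrow> dist (pd 2 (pd 1 f) z) (pd 2 (pd 1 f) p) < e"
    using c2 e unfolding continuous_at_eps_delta by blast
  define h where "h = min (r/3) (min (d1/3) (d2/3))"
  have h: "0 < h" "2 * h < r" "2 * h < d1" "2 * h < d2" using r d1 d2 by (auto simp: h_def)
  obtain s t where st: "0 < s" "s < h" "0 < t" "t < h"
    "f (p + h *\<^sub>R axis 1 1 + h *\<^sub>R axis 2 1) - f (p + h *\<^sub>R axis 1 1) - f (p + h *\<^sub>R axis 2 1) + f p
     = h * h * pd 2 (pd 1 f) (p + s *\<^sub>R axis 1 1 + t *\<^sub>R axis 2 1)"
    using second_difference_mean_value[OF r(2) assms(3) assms(4) h(1,2), of 1 2] by blast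
  obtain s' t' where st': "0 < s'" "s' < h" "0 < t'" "t' < h"
    "f (p + h *\<^sub>R axis 2 1 + h *\<^sub>R axis 1 1) - f (p + h *\<^sub>R axis 2 1) - f (p + h *\<^sub>R axis 1 1) + f p
     = h * h * pd 1 (pd 2 f) (p + s' *\<^sub>R axis 2 1 + t' *\<^sub>R axis 1 1)"
    using second_difference_mean_value[OF r(2) assms(3) assms(4) h(1,2), of 2 1] by blast
  have "h * h * pd 2 (pd 1 f) (p + s *\<^sub>R axis 1 1 + t *\<^sub>R axis 2 1) = h * h * pd 1 (pd 2 f) (p + s' *\<^sub>R axis 2 1 + t' *\<^sub>R axis 1 1)"
  proof -
    have pe: "p + h *\<^sub>R axis 2 1 + h *\<^sub>R axis 1 1 = p + h *\<^sub>R axis 1 1 + h *\<^sub>R axis 2 1" by (simp add: add_ac)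
    show ?thesis using st(5) st'(5)[unfolded pe] by linarith
  qed
  then have eq: "pd 2 (pd 1 f) (p + s *\<^sub>R axis 1 1 + t *\<^sub>R axis 2 1) = pd 1 (pd 2 f) (p + s' *\<^sub>R axis 2 1 + t' *\<^sub>R axis 1 1)"
    using h by (metis mult_cancel_left mult_eq_0_iff order_less_irrefl)
  have dd: "dist (p + v) p = norm v" for v :: "real^2" by (simp add: dist_norm)
  have n1: "dist (p + s *\<^sub>R axis 1 1 + t *\<^sub>R axis 2 1) p < d2"
    using norm_axis_sum_le[of s 1 t 2] st h dd[of "s *\<^sub>R axis 1 1 + t *\<^sub>R axis 2 1"] by (simp add: add.assoc)
  have n2: "dist (p + s' *\<^sub>R axis 2 1 + t' *\<^sub>R axis 1 1) p < d1"
    using norm_axis_sum_le[of s' 2 t' 1] st' h dd[of "s' *\<^sub>R axis 2 1 + t' *\<^sub>R axis 1 1"] by (simp add: add.assoc)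
  have "\<bar>pd 1 (pd 2 f) p - pd 2 (pd 1 f) p\<bar> < e + e"
    using d1(2)[OF n2] d2(2)[OF n1] eq by (simp add: dist_real_def)
  then show False by (simp add: e_def)
qed

lemma smooth_on_Ck: "smooth_on U f \<Longrightarrow> Ck k U f"
  by (simp add: smooth_on_def)

lemma smooth_on_imp_differentiable: "smooth_on U f \<Longrightarrow> p \<in> U \<Longrightarrow> f differentiable at p"
  using smooth_on_Ck[of U f 1] by simp

lemma smooth_on_pd: "smooth_on U f \<Longrightarrow> smooth_on U (pd i f)"
  unfolding smooth_on_def by (metis Ck.simps(2))

lemma smooth_on_imp_continuous_on: "smooth_on U f \<Longrightarrow> continuous_on U f"
  using smooth_on_Ck[of U f 0] by simp

lemma smooth_on_scaleR_left:
  assumes "smooth_on UNIV \<phi>"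
  shows "smooth_on UNIV (\<lambda>x. \<phi> x *\<^sub>R v)"
proof -
  have "smooth_on UNIV \<phi> \<longrightarrow> Ck k UNIV (\<lambda>x. \<phi> x *\<^sub>R v)" for k
  proof (induction k arbitrary: \<phi>)
    case 0
    then show ?case by (auto intro!: continuous_intros dest: smooth_on_imp_continuous_on)
  next
    case (Suc k)
    show ?case
    proof
      assume \<phi>: "smooth_on UNIV \<phi>"
      have "pd i (\<lambda>x. \<phi> x *\<^sub>R v) = (\<lambda>x. pd i \<phi> x *\<^sub>R v)" for i
        using \<phi> by (auto intro!: ext pd_scaleR_left smooth_on_imp_differentiable)
      then show "Ck (Suc k) UNIV (\<lambda>x. \<phi> x *\<^sub>R v)"
        using Suc.IH[rule_format, OF smooth_on_pd[OF \<phi>]] smooth_on_imp_differentiable[OF \<phi>]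
        by (auto intro!: differentiable_scaleR_left)
    qed
  qed
  then show ?thesis using assms by (simp add: smooth_on_def)
qed

lemma pd_commute_smooth:
  fixes f :: "real^2 \<Rightarrow> real"
  assumes "open U" "smooth_on U f" "p \<in> U"
  shows "pd 1 (pd 2 f) p = pd 2 (pd 1 f) p"
  using assms by (intro pd_commute)
    (auto intro: smooth_on_imp_differentiable smooth_on_imp_continuous_on smooth_on_pd)

lemma pd_commute_smooth_vec:
  fixes f :: "real^2 \<Rightarrow> real^'n"
  assumes U: "open U" and f: "smooth_on U f" and p: "p \<in> U"
  shows "pd 1 (pd 2 f) p = pd 2 (pd 1 f) p"
proof -
  have "pd 1 (pd 2 f) p $ c = pd 2 (pd 1 f) p $ c" for c
  proof -
    define g where "g x = f x $ c" for x
    have pd_g: "pd i g x = pd i f x $ c" if "x \<in> U" for i x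
      unfolding g_def using pd_vec_nth[OF smooth_on_imp_differentiable[OF f that]] .
    have pd_pd_g: "pd j (pd i g) x = pd j (pd i f) x $ c" if "x \<in> U" for i j x
    proof -
      have "pd j (pd i g) x = pd j (\<lambda>x. pd i f x $ c) x"
        using pd_cong_open[OF U that, of "pd i g"] pd_g by auto
      also have "\<dots> = pd j (pd i f) x $ c"
        using pd_vec_nth[OF smooth_on_imp_differentiable[OF smooth_on_pd[OF f] that]] .
      finally show ?thesis .
    qed
    have "pd 1 (pd 2 g) p = pd 2 (pd 1 g) p"
    proof (rule pd_commute[OF U p])
      show "g differentiable at x" if "x \<in> U" for x
        unfolding g_def using differentiable_vec_nth[OF smooth_on_imp_differentiable[OF f that]] .
      show "pd i g differentiable at x" if x: "x \<in> U" for x i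
      proof -
        obtain D where "((\<lambda>x. pd i f x $ c) has_derivative D) (at x)"
          using differentiable_vec_nth[OF smooth_on_imp_differentiable[OF smooth_on_pd[OF f] x]]
          by (auto simp: differentiable_def)
        then have "(pd i g has_derivative D) (at x)"
          by (rule has_derivative_transform_within_open[OF _ U x]) (simp add: pd_g)
        then show ?thesis by (auto simp: differentiable_def)
      qed
      show "continuous_on U (pd i (pd j g))" for i j
      proof -
        have "continuous_on U (\<lambda>x. pd i (pd j f) x $ c)"
          using smooth_on_imp_continuous_on[OF smooth_on_pd[OF smooth_on_pd[OF f]]]
          by (intro continuous_intros)
        then show ?thesis using continuous_on_cong pd_pd_g by (metis (no_types, lifting))
      qed
    qed
    then show ?thesis using pd_pd_g[OF p] by simp
  qed
  then show ?thesis by (simp add: vec_eq_iff)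
qed

section \<open>Integrals over compact sets\<close>

lemma integrable_continuous_on_compact:
  fixes g :: "'a::euclidean_space \<Rightarrow> 'b::euclidean_space"
  assumes "compact S" "continuous_on S g"
  shows "g integrable_on S"
proof -
  have "(\<lambda>x. indicator S x *\<^sub>R g x) integrable_on UNIV"
    using has_integral_integral_lborel[OF borel_integrable_compact[OF assms]] by blast
  moreover have "(\<lambda>x. indicator S x *\<^sub>R g x) = (\<lambda>x. if x \<in> S then g x else 0)"
    by (auto simp: indicator_def)
  ultimately show ?thesis using integrable_restrict_UNIV by metis
qed

lemma
  fixes g :: "'a::euclidean_space \<Rightarrow> 'b::euclidean_space"
  assumes "compact K" "K \<subseteq> U" "continuous_on K g" "\<And>x. x \<notin> K \<Longrightarrow> g x = 0"
  shows integrable_on_compact_support: "g integrable_on U"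
    and integral_compact_support: "integral U g = integral K g"
proof -
  have "(g has_integral integral K g) K"
    using integrable_continuous_on_compact[OF assms(1,3)] by auto
  then have "(g has_integral integral K g) U"
    using has_integral_on_superset assms(2,4) by blast
  then show "g integrable_on U" "integral U g = integral K g" by auto
qed

lemma integral_vec_nth_compact_support:
  fixes g :: "'a::euclidean_space \<Rightarrow> real^'n"
  assumes "compact K" "K \<subseteq> U" "continuous_on K g" "\<And>x. x \<notin> K \<Longrightarrow> g x = 0"
  shows "integral U g $ c = integral K (\<lambda>x. g x $ c)"
proof -
  have "continuous_on K (\<lambda>x. g x $ c)" using assms(3) by (intro continuous_intros)
  then show ?thesis
    using integral_component_eq_cart[OF integrable_on_compact_support[OF assms], of c]
      integral_compact_support[OF assms(1,2), of "\<lambda>x. g x $ c"] assms(4) by simp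
qed

lemma integral_vec_nth_diff_sum_compact_support:
  fixes g :: "'a::euclidean_space \<Rightarrow> real^'n" and h :: "'n \<Rightarrow> 'k::finite \<Rightarrow> 'a \<Rightarrow> real^'n"
  assumes K: "compact K" "K \<subseteq> U" and cont: "continuous_on K g" "\<And>d k. continuous_on K (h d k)"
    and zero: "\<And>x. x \<notin> K \<Longrightarrow> g x = 0" "\<And>d k x. x \<notin> K \<Longrightarrow> h d k x = 0"
  shows "integral U g $ c - (\<Sum>d\<in>UNIV. \<Sum>k\<in>UNIV. integral U (h d k) $ d)
    = integral K (\<lambda>x. g x $ c - (\<Sum>d\<in>UNIV. \<Sum>k\<in>UNIV. h d k x $ d))"
proof -
  have int_h: "(\<lambda>x. h d k x $ d) integrable_on K" for d k
    using cont(2) by (intro integrable_continuous_on_compact[OF K(1)] continuous_intros)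
  have int_sum: "(\<lambda>x. \<Sum>k\<in>UNIV. h d k x $ d) integrable_on K" for d
    by (rule integrable_sum) (auto intro: int_h)
  have "(\<Sum>d\<in>UNIV. \<Sum>k\<in>UNIV. integral K (\<lambda>x. h d k x $ d))
      = integral K (\<lambda>x. \<Sum>d\<in>UNIV. \<Sum>k\<in>UNIV. h d k x $ d)"
    using int_h int_sum by (simp add: integral_sum[symmetric])
  moreover have "(\<lambda>x. \<Sum>d\<in>UNIV. \<Sum>k\<in>UNIV. h d k x $ d) integrable_on K"
    by (intro integrable_sum) (auto intro: int_h)
  moreover have "(\<lambda>x. g x $ c) integrable_on K"
    using cont(1) by (intro integrable_continuous_on_compact[OF K(1)] continuous_intros)
  ultimately show ?thesis
    using integral_vec_nth_compact_support[OF K cont(1) zero(1)]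
      integral_vec_nth_compact_support[OF K cont(2) zero(2)]
    by (simp add: integral_diff)
qed

lemma mean_value_linearization_bound:
  fixes f f' :: "real \<Rightarrow> real"
  assumes "\<And>r. \<bar>r\<bar> \<le> \<bar>t\<bar> \<Longrightarrow> (f has_real_derivative f' r) (at r)"
    and "\<And>r. \<bar>r\<bar> \<le> \<bar>t\<bar> \<Longrightarrow> \<bar>f' r - f' 0\<bar> \<le> e"
  shows "\<bar>f t - f 0 - t * f' 0\<bar> \<le> \<bar>t\<bar> * e"
proof -
  have "\<exists>z. \<bar>z\<bar> \<le> \<bar>t\<bar> \<and> f t - f 0 = t * f' z"
  proof (cases "t > 0")
    case True
    obtain z where "0 < z" "z < t" "f t - f 0 = (t - 0) * f' z"
      using MVT2[OF True, of f f'] assms(1) by force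
    then show ?thesis by (intro exI[of _ z]) auto
  next
    case False
    show ?thesis
    proof (cases "t = 0")
      case False
      with \<open>\<not> t > 0\<close> have tn: "t < 0" by simp
      obtain z where "t < z" "z < 0" "f 0 - f t = (0 - t) * f' z"
        using MVT2[OF tn, of f f'] assms(1) tn by force
      then show ?thesis by (intro exI[of _ z]) (auto simp: algebra_simps)
    qed simp
  qed
  then obtain z where z: "\<bar>z\<bar> \<le> \<bar>t\<bar>" "f t - f 0 = t * f' z" by blast
  have "\<bar>t * (f' z - f' 0)\<bar> \<le> \<bar>t\<bar> * e"
    using assms(2)[OF z(1)] by (simp add: abs_mult mult_left_mono)
  then show ?thesis using z(2) by (simp add: algebra_simps)
qed

lemma integral_linearization_bound:
  fixes g g0 g' :: "'a::euclidean_space \<Rightarrow> real"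
  assumes S: "compact S" and int: "g integrable_on S" "g0 integrable_on S" "g' integrable_on S"
    and bound: "\<And>x. x \<in> S \<Longrightarrow> \<bar>g x - g0 x - t * g' x\<bar> \<le> \<bar>t\<bar> * e"
  shows "\<bar>integral S g - integral S g0 - t * integral S g'\<bar> \<le> \<bar>t\<bar> * e * integral S (\<lambda>_. 1)"
proof -
  have int_lin: "(\<lambda>x. t * g' x) integrable_on S"
    using integrable_on_cmult_left[OF int(3), of t] by simp
  have "integral S g - integral S g0 - t * integral S g' = integral S (\<lambda>x. g x - g0 x - t * g' x)"
    using integral_diff[OF integrable_diff[OF int(1,2)] int_lin] integral_diff[OF int(1,2)] by simp
  also have "norm \<dots> \<le> integral S (\<lambda>_. \<bar>t\<bar> * e)"
    using bound by (intro integral_norm_bound_integral integrable_diff int int_lin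
        integrable_continuous_on_compact[OF S continuous_on_const]) auto
  also have "\<dots> = \<bar>t\<bar> * e * integral S (\<lambda>_. 1)"
    using integral_mult_right[of S "\<bar>t\<bar> * e" "\<lambda>_. 1::real"] by simp
  finally show ?thesis by simp
qed

text \<open>Joint continuity of \<open>f'\<close> on the compact set \<open>cball 0 \<delta> \<times> S\<close> makes the linearization
  error of \<open>f t x\<close> at \<open>t = 0\<close> small uniformly in \<open>x\<close>.\<close>

lemma has_real_derivative_integral_compact:
  fixes f f' :: "real \<Rightarrow> 'a::euclidean_space \<Rightarrow> real"
  assumes S: "compact S" and \<delta>: "0 < \<delta>"
    and deriv: "\<And>t x. t \<in> cball 0 \<delta> \<Longrightarrow> x \<in> S \<Longrightarrow> ((\<lambda>t. f t x) has_real_derivative f' t x) (at t)"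
    and cont': "continuous_on (cball 0 \<delta> \<times> S) (\<lambda>(t,x). f' t x)"
    and cont: "\<And>t. t \<in> cball 0 \<delta> \<Longrightarrow> continuous_on S (f t)"
  shows "((\<lambda>t. integral S (f t)) has_real_derivative integral S (f' 0)) (at 0)"
proof -
  have int: "g integrable_on S" if "continuous_on S g" for g :: "'a \<Rightarrow> real"
    using integrable_continuous_on_compact[OF S that] .
  have "continuous_on S (\<lambda>x. (\<lambda>(t,x). f' t x) (0, x))"
    by (rule continuous_on_compose2[OF cont']) (auto intro!: continuous_intros simp: \<delta> less_imp_le)
  then have int0: "f' 0 integrable_on S" by (simp add: int)
  have int_t: "f t integrable_on S" if "t \<in> cball 0 \<delta>" for t using int[OF cont[OF that]] .
  define \<mu> where "\<mu> = integral S (\<lambda>_. 1::real)"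
  have \<mu>: "\<mu> \<ge> 0" unfolding \<mu>_def by (rule integral_nonneg) (auto intro: int continuous_on_const)
  show ?thesis unfolding has_field_derivative_iff LIM_eq
  proof (intro allI impI)
    fix e' :: real assume e': "e' > 0"
    define e where "e = e' / (2 * (\<mu> + 1))"
    have e: "e > 0" using e' \<mu> by (simp add: e_def)
    have "(0::real) \<in> cball 0 \<delta>" using \<delta> by simp
    from continuous_on_prod_compactE[OF cont' S this e]
    obtain X0 where X0: "0 \<in> X0" "open X0"
      "\<forall>t\<in>X0 \<inter> cball 0 \<delta>. \<forall>x\<in>S. dist (f' t x) (f' 0 x) \<le> e" by auto
    obtain s0 where s0: "s0 > 0" "ball 0 s0 \<subseteq> X0" using X0 open_contains_ball by blast
    define s where "s = min s0 \<delta>"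
    have s: "s > 0" using s0 \<delta> by (simp add: s_def)
    show "\<exists>s>0. \<forall>t. t \<noteq> 0 \<and> norm (t - 0) < s \<longrightarrow>
        norm ((integral S (f t) - integral S (f 0)) / (t - 0) - integral S (f' 0)) < e'"
    proof (intro exI conjI allI impI)
      show "s > 0" by (rule s)
      fix t :: real assume t: "t \<noteq> 0 \<and> norm (t - 0) < s"
      have t_in: "r \<in> X0 \<inter> cball 0 \<delta>" if "\<bar>r\<bar> \<le> \<bar>t\<bar>" for r
        using that t s0(2) by (auto simp: s_def subset_iff)
      have bound: "\<bar>f t x - f 0 x - t * f' 0 x\<bar> \<le> \<bar>t\<bar> * e" if x: "x \<in> S" for x
      proof (rule mean_value_linearization_bound)
        show "((\<lambda>t. f t x) has_real_derivative f' r x) (at r)" if "\<bar>r\<bar> \<le> \<bar>t\<bar>" for r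
          using deriv t_in[OF that] x by auto
        show "\<bar>f' r x - f' 0 x\<bar> \<le> e" if "\<bar>r\<bar> \<le> \<bar>t\<bar>" for r
          using X0(3) t_in[OF that] x by (auto simp: dist_real_def)
      qed
      have "t \<in> cball 0 \<delta>" "(0::real) \<in> cball 0 \<delta>" using t \<delta> by (auto simp: s_def)
      then have *: "\<bar>integral S (f t) - integral S (f 0) - t * integral S (f' 0)\<bar> \<le> \<bar>t\<bar> * e * \<mu>"
        unfolding \<mu>_def using bound by (intro integral_linearization_bound[OF S int_t int_t int0])
      have "\<bar>(integral S (f t) - integral S (f 0)) / t - integral S (f' 0)\<bar>
          = \<bar>integral S (f t) - integral S (f 0) - t * integral S (f' 0)\<bar> / \<bar>t\<bar>"
        using t by (simp add: field_simps flip: abs_divide)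
      also have "\<dots> \<le> e * \<mu>" using * t by (simp add: divide_le_eq mult.commute mult.left_commute)
      also have "\<dots> < e'" using e' \<mu> by (simp add: e_def field_simps) (smt (verit) mult_nonneg_nonneg)
      finally show "norm ((integral S (f t) - integral S (f 0)) / (t - 0) - integral S (f' 0)) < e'"
        by simp
    qed
  qed
qed

section \<open>Mean curvature and \<open>|A|\<^sup>2\<close> as functions of the 2-jet\<close>

lemma matrix_inv_unique:
  fixes A B :: "real^'n^'n"
  assumes "A ** B = mat 1" "B ** A = mat 1"
  shows "matrix_inv A = B"
proof -
  have "\<exists>A'. A ** A' = mat 1 \<and> A' ** A = mat 1" using assms by blast
  then have C: "A ** matrix_inv A = mat 1" "matrix_inv A ** A = mat 1"
    unfolding matrix_inv_def by (metis (mono_tags, lifting) someI_ex)+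
  have "matrix_inv A = matrix_inv A ** (A ** B)" using assms by simp
  also have "\<dots> = (matrix_inv A ** A) ** B" by (simp add: matrix_mul_assoc)
  also have "\<dots> = B" using C by simp
  finally show ?thesis .
qed

lemma matrix_inv_2x2:
  fixes M :: "real^2^2"
  assumes "M$1$1 * M$2$2 - M$1$2 * M$2$1 \<noteq> 0"
  shows "matrix_inv M = (\<chi> i j. (if i = 1 then (if j = 1 then M$2$2 else - M$1$2)
            else (if j = 1 then - M$2$1 else M$1$1)) / (M$1$1 * M$2$2 - M$1$2 * M$2$1))"
proof -
  have sq: "(M$1$1 * M$2$2 - M$1$2 * M$2$1)^2 > 0" using assms by simp
  show ?thesis
    by (rule matrix_inv_unique) (use assms sq in \<open>auto simp: matrix_matrix_mult_def vec_eq_iff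
        sum_2 forall_2 mat_def field_simps power2_eq_square\<close>)
qed

text \<open>The curvature quantities as functions of the metric coefficients \<open>a = X \<bullet> X\<close>,
  \<open>b = X \<bullet> Y\<close>, \<open>c = Y \<bullet> Y\<close> and of the products \<open>S i j \<bullet> N\<close> of the second derivatives with the
  unnormalized normal \<open>N = X \<times> Y\<close>; here \<open>r = |N|\<close> and \<open>q = N \<bullet> N\<close>.  The \<open>_deriv\<close> variants are
  the derivatives along a curve, written in terms of the derivatives (primed) of the arguments.\<close>

definition mcurv_coeffs :: "real \<Rightarrow> real \<Rightarrow> real \<Rightarrow> real \<Rightarrow> real \<Rightarrow> real \<Rightarrow> real \<Rightarrow> real \<Rightarrow> real" where
  "mcurv_coeffs a b c b11 b12 b21 b22 r = (c * b11 - b * b12 - b * b21 + a * b22) / (2 * (a * c - b * b) * r)"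

definition mcurv_coeffs_deriv :: "real \<Rightarrow> real \<Rightarrow> real \<Rightarrow> real \<Rightarrow> real \<Rightarrow> real \<Rightarrow> real \<Rightarrow> real \<Rightarrow>
   real \<Rightarrow> real \<Rightarrow> real \<Rightarrow> real \<Rightarrow> real \<Rightarrow> real \<Rightarrow> real \<Rightarrow> real \<Rightarrow> real" where
  "mcurv_coeffs_deriv a b c b11 b12 b21 b22 r a' b' c' b11' b12' b21' b22' r' =
    ((c' * b11 + c * b11' - (b' * b12 + b * b12') - (b' * b21 + b * b21') + (a' * b22 + a * b22'))
       * (2 * (a * c - b * b) * r)
     - (c * b11 - b * b12 - b * b21 + a * b22) * (2 * ((a' * c + a * c' - (b' * b + b * b')) * r + (a * c - b * b) * r')))
    / (2 * (a * c - b * b) * r) ^ 2"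

definition adjugate2 :: "real \<Rightarrow> real \<Rightarrow> real \<Rightarrow> 2 \<Rightarrow> 2 \<Rightarrow> real" where
  "adjugate2 a b c i j = (if i = 1 then (if j = 1 then c else - b) else (if j = 1 then - b else a))"

definition sqA_numer :: "real \<Rightarrow> real \<Rightarrow> real \<Rightarrow> (2 \<Rightarrow> 2 \<Rightarrow> real) \<Rightarrow> real" where
  "sqA_numer a b c \<beta> = (\<Sum>i\<in>UNIV. \<Sum>j\<in>UNIV. \<Sum>k\<in>UNIV. \<Sum>l\<in>UNIV.
     adjugate2 a b c i k * adjugate2 a b c j l * \<beta> i j * \<beta> k l)"

definition sqA_numer_deriv :: "real \<Rightarrow> real \<Rightarrow> real \<Rightarrow> (2 \<Rightarrow> 2 \<Rightarrow> real) \<Rightarrow> real \<Rightarrow> real \<Rightarrow> real \<Rightarrow> (2 \<Rightarrow> 2 \<Rightarrow> real) \<Rightarrow> real" where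
  "sqA_numer_deriv a b c \<beta> a' b' c' \<beta>' = (\<Sum>i\<in>UNIV. \<Sum>j\<in>UNIV. \<Sum>k\<in>UNIV. \<Sum>l\<in>UNIV.
     adjugate2 a' b' c' i k * adjugate2 a b c j l * \<beta> i j * \<beta> k l
     + adjugate2 a b c i k * adjugate2 a' b' c' j l * \<beta> i j * \<beta> k l
     + adjugate2 a b c i k * adjugate2 a b c j l * \<beta>' i j * \<beta> k l
     + adjugate2 a b c i k * adjugate2 a b c j l * \<beta> i j * \<beta>' k l)"

definition sqA_coeffs :: "real \<Rightarrow> real \<Rightarrow> real \<Rightarrow> (2 \<Rightarrow> 2 \<Rightarrow> real) \<Rightarrow> real \<Rightarrow> real" where
  "sqA_coeffs a b c \<beta> q = sqA_numer a b c \<beta> / ((a * c - b * b) * (a * c - b * b) * q)"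

definition sqA_coeffs_deriv :: "real \<Rightarrow> real \<Rightarrow> real \<Rightarrow> (2 \<Rightarrow> 2 \<Rightarrow> real) \<Rightarrow> real \<Rightarrow>
    real \<Rightarrow> real \<Rightarrow> real \<Rightarrow> (2 \<Rightarrow> 2 \<Rightarrow> real) \<Rightarrow> real \<Rightarrow> real" where
  "sqA_coeffs_deriv a b c \<beta> q a' b' c' \<beta>' q' =
     (sqA_numer_deriv a b c \<beta> a' b' c' \<beta>' * ((a * c - b * b) * (a * c - b * b) * q)
      - sqA_numer a b c \<beta> * ((2 * (a * c - b * b) * (a' * c + a * c' - (b' * b + b * b'))) * q
            + (a * c - b * b) * (a * c - b * b) * q'))
     / ((a * c - b * b) * (a * c - b * b) * q) ^ 2"

definition gram_det :: "real^3 \<Rightarrow> real^3 \<Rightarrow> real" where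
  "gram_det X Y = (X \<bullet> X) * (Y \<bullet> Y) - (X \<bullet> Y) * (X \<bullet> Y)"

lemma gram_det_eq_inner_cross3: "gram_det X Y = cross3 X Y \<bullet> cross3 X Y"
  by (simp add: gram_det_def cross3_simps)

lemma gram_det_nonzero: "cross3 X Y \<noteq> 0 \<Longrightarrow> gram_det X Y \<noteq> 0"
  by (simp add: gram_det_eq_inner_cross3)

definition mcurv_jet :: "real^3 \<Rightarrow> real^3 \<Rightarrow> (2 \<Rightarrow> 2 \<Rightarrow> real^3) \<Rightarrow> real" where
  "mcurv_jet X Y S = ((Y \<bullet> Y) * (S 1 1 \<bullet> cross3 X Y) - (X \<bullet> Y) * (S 1 2 \<bullet> cross3 X Y)
     - (X \<bullet> Y) * (S 2 1 \<bullet> cross3 X Y) + (X \<bullet> X) * (S 2 2 \<bullet> cross3 X Y))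
     / (2 * gram_det X Y * norm (cross3 X Y))"

definition sqA_jet :: "real^3 \<Rightarrow> real^3 \<Rightarrow> (2 \<Rightarrow> 2 \<Rightarrow> real^3) \<Rightarrow> real" where
  "sqA_jet X Y S = (\<Sum>i\<in>UNIV. \<Sum>j\<in>UNIV. \<Sum>k\<in>UNIV. \<Sum>l\<in>UNIV.
      adjugate2 (X \<bullet> X) (X \<bullet> Y) (Y \<bullet> Y) i k * adjugate2 (X \<bullet> X) (X \<bullet> Y) (Y \<bullet> Y) j l
      * (S i j \<bullet> cross3 X Y) * (S k l \<bullet> cross3 X Y))
    / (gram_det X Y * gram_det X Y * (cross3 X Y \<bullet> cross3 X Y))"

lemma mcurv_jet_eq_coeffs:
  "mcurv_jet X Y S = mcurv_coeffs (X \<bullet> X) (X \<bullet> Y) (Y \<bullet> Y) (S 1 1 \<bullet> cross3 X Y) (S 1 2 \<bullet> cross3 X Y)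
     (S 2 1 \<bullet> cross3 X Y) (S 2 2 \<bullet> cross3 X Y) (norm (cross3 X Y))"
  unfolding mcurv_jet_def mcurv_coeffs_def gram_det_def by simp

lemma sqA_jet_eq_coeffs:
  "sqA_jet X Y S = sqA_coeffs (X \<bullet> X) (X \<bullet> Y) (Y \<bullet> Y) (\<lambda>i j. S i j \<bullet> cross3 X Y) (cross3 X Y \<bullet> cross3 X Y)"
  unfolding sqA_jet_def sqA_coeffs_def sqA_numer_def gram_det_def by simp

lemma mcurv_eq_mcurv_jet:
  assumes "cross3 (pd 1 \<Psi> p) (pd 2 \<Psi> p) \<noteq> 0"
  shows "mcurv \<Psi> p = mcurv_jet (pd 1 \<Psi> p) (pd 2 \<Psi> p) (\<lambda>i j. pd i (pd j \<Psi>) p)"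
proof -
  let ?X = "pd 1 \<Psi> p" and ?Y = "pd 2 \<Psi> p"
  have D: "gram_det ?X ?Y \<noteq> 0" using gram_det_nonzero[OF assms] .
  have n: "norm (cross3 ?X ?Y) \<noteq> 0" using assms by simp
  have gram: "gmat \<Psi> p $1$1 * gmat \<Psi> p $2$2 - gmat \<Psi> p $1$2 * gmat \<Psi> p $2$1 = gram_det ?X ?Y"
    by (simp add: gmat_def gram_det_def inner_commute)
  show ?thesis
    unfolding mcurv_def matrix_inv_2x2[of "gmat \<Psi> p", unfolded gram, OF D] sff_def nrm_def mcurv_jet_def
    using D n by (simp add: sum_2 gmat_def field_simps inner_commute)
qed

lemma sqA_eq_sqA_jet:
  assumes "cross3 (pd 1 \<Psi> p) (pd 2 \<Psi> p) \<noteq> 0"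
  shows "sqA \<Psi> p = sqA_jet (pd 1 \<Psi> p) (pd 2 \<Psi> p) (\<lambda>i j. pd i (pd j \<Psi>) p)"
proof -
  let ?X = "pd 1 \<Psi> p" and ?Y = "pd 2 \<Psi> p"
  have D: "gram_det ?X ?Y \<noteq> 0" using gram_det_nonzero[OF assms] .
  have n: "norm (cross3 ?X ?Y) \<noteq> 0" using assms by simp
  have nn: "cross3 ?X ?Y \<bullet> cross3 ?X ?Y = norm (cross3 ?X ?Y) * norm (cross3 ?X ?Y)"
    by (simp add: power2_norm_eq_inner[symmetric] power2_eq_square)
  have gram: "gmat \<Psi> p $1$1 * gmat \<Psi> p $2$2 - gmat \<Psi> p $1$2 * gmat \<Psi> p $2$1 = gram_det ?X ?Y"
    by (simp add: gmat_def gram_det_def inner_commute)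
  show ?thesis
    unfolding sqA_def matrix_inv_2x2[of "gmat \<Psi> p", unfolded gram, OF D] sff_def nrm_def sqA_jet_def nn
    using D n by (simp add: sum_2 gmat_def adjugate2_def field_simps inner_commute)
qed

lemma has_real_derivative_mcurv_coeffs:
  assumes "(a has_real_derivative a') (at t)" "(b has_real_derivative b') (at t)" "(c has_real_derivative c') (at t)"
    "(b11 has_real_derivative b11') (at t)" "(b12 has_real_derivative b12') (at t)"
    "(b21 has_real_derivative b21') (at t)" "(b22 has_real_derivative b22') (at t)"
    "(r has_real_derivative r') (at t)" "a t * c t - b t * b t \<noteq> 0" "r t \<noteq> 0"
  shows "((\<lambda>t. mcurv_coeffs (a t) (b t) (c t) (b11 t) (b12 t) (b21 t) (b22 t) (r t)) has_real_derivative
     mcurv_coeffs_deriv (a t) (b t) (c t) (b11 t) (b12 t) (b21 t) (b22 t) (r t) a' b' c' b11' b12' b21' b22' r') (at t)"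
  unfolding mcurv_coeffs_def mcurv_coeffs_deriv_def
  apply (rule DERIV_cong)
   apply (rule derivative_intros assms)+
  using assms(9,10) apply simp
  apply (simp only: power2_eq_square)
  apply (rule arg_cong2[where f="(/)"])
   apply (simp add: algebra_simps)
  apply (simp add: algebra_simps)
  done

lemma has_real_derivative_adjugate2:
  assumes "(a has_real_derivative a') (at t)" "(b has_real_derivative b') (at t)" "(c has_real_derivative c') (at t)"
  shows "((\<lambda>t. adjugate2 (a t) (b t) (c t) i j) has_real_derivative adjugate2 a' b' c' i j) (at t)"
  unfolding adjugate2_def using assms by (auto intro!: derivative_intros)

lemma has_real_derivative_sqA_numer:
  assumes "(a has_real_derivative a') (at t)" "(b has_real_derivative b') (at t)" "(c has_real_derivative c') (at t)"
    "\<And>i j. ((\<lambda>t. \<beta> t i j) has_real_derivative \<beta>' i j) (at t)"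
  shows "((\<lambda>t. sqA_numer (a t) (b t) (c t) (\<beta> t)) has_real_derivative
      sqA_numer_deriv (a t) (b t) (c t) (\<beta> t) a' b' c' \<beta>') (at t)"
  unfolding sqA_numer_def sqA_numer_deriv_def
  apply (rule DERIV_sum)+
  apply (rule DERIV_cong)
   apply (rule DERIV_mult has_real_derivative_adjugate2 assms)+
  apply (simp add: algebra_simps)
  done

lemma has_real_derivative_sqA_coeffs:
  assumes "(a has_real_derivative a') (at t)" "(b has_real_derivative b') (at t)" "(c has_real_derivative c') (at t)"
    "\<And>i j. ((\<lambda>t. \<beta> t i j) has_real_derivative \<beta>' i j) (at t)"
    "(q has_real_derivative q') (at t)" "a t * c t - b t * b t \<noteq> 0" "q t \<noteq> 0"
  shows "((\<lambda>t. sqA_coeffs (a t) (b t) (c t) (\<beta> t) (q t)) has_real_derivative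
      sqA_coeffs_deriv (a t) (b t) (c t) (\<beta> t) (q t) a' b' c' \<beta>' q') (at t)"
  unfolding sqA_coeffs_def sqA_coeffs_deriv_def
  apply (rule DERIV_cong)
   apply (rule DERIV_divide has_real_derivative_sqA_numer DERIV_mult DERIV_diff assms)+
  using assms(6,7) apply simp
  apply (simp only: power2_eq_square)
  apply (rule arg_cong2[where f="(/)"])
   apply (simp add: algebra_simps)
  apply (simp add: algebra_simps)
  done

lemma continuous_on_mcurv_coeffs:
  assumes "continuous_on T a" "continuous_on T b" "continuous_on T c" "continuous_on T b11"
    "continuous_on T b12" "continuous_on T b21" "continuous_on T b22" "continuous_on T r"
    "\<And>z. z \<in> T \<Longrightarrow> a z * c z - b z * b z \<noteq> 0" "\<And>z. z \<in> T \<Longrightarrow> r z \<noteq> 0"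
  shows "continuous_on T (\<lambda>z. mcurv_coeffs (a z) (b z) (c z) (b11 z) (b12 z) (b21 z) (b22 z) (r z))"
  unfolding mcurv_coeffs_def using assms by (intro continuous_intros) auto

lemma continuous_on_mcurv_coeffs_deriv:
  assumes "continuous_on T a" "continuous_on T b" "continuous_on T c" "continuous_on T b11"
    "continuous_on T b12" "continuous_on T b21" "continuous_on T b22" "continuous_on T r"
    "continuous_on T a'" "continuous_on T b'" "continuous_on T c'" "continuous_on T b11'"
    "continuous_on T b12'" "continuous_on T b21'" "continuous_on T b22'" "continuous_on T r'"
    "\<And>z. z \<in> T \<Longrightarrow> a z * c z - b z * b z \<noteq> 0" "\<And>z. z \<in> T \<Longrightarrow> r z \<noteq> 0"
  shows "continuous_on T (\<lambda>z. mcurv_coeffs_deriv (a z) (b z) (c z) (b11 z) (b12 z) (b21 z) (b22 z) (r z)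
     (a' z) (b' z) (c' z) (b11' z) (b12' z) (b21' z) (b22' z) (r' z))"
  unfolding mcurv_coeffs_deriv_def using assms by (intro continuous_intros) auto

lemma continuous_on_adjugate2:
  assumes "continuous_on T a" "continuous_on T b" "continuous_on T c"
  shows "continuous_on T (\<lambda>z. adjugate2 (a z) (b z) (c z) i j)"
  unfolding adjugate2_def using assms by (cases "i = 1"; cases "j = 1") (auto intro!: continuous_intros)

lemma continuous_on_sqA_numer:
  assumes "continuous_on T a" "continuous_on T b" "continuous_on T c" "\<And>i j. continuous_on T (\<lambda>z. \<beta> z i j)"
  shows "continuous_on T (\<lambda>z. sqA_numer (a z) (b z) (c z) (\<beta> z))"
  unfolding sqA_numer_def by (intro continuous_intros continuous_on_adjugate2 assms)

lemma continuous_on_sqA_numer_deriv: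
  assumes "continuous_on T a" "continuous_on T b" "continuous_on T c" "\<And>i j. continuous_on T (\<lambda>z. \<beta> z i j)"
    "continuous_on T a'" "continuous_on T b'" "continuous_on T c'" "\<And>i j. continuous_on T (\<lambda>z. \<beta>' z i j)"
  shows "continuous_on T (\<lambda>z. sqA_numer_deriv (a z) (b z) (c z) (\<beta> z) (a' z) (b' z) (c' z) (\<beta>' z))"
  unfolding sqA_numer_deriv_def by (intro continuous_intros continuous_on_adjugate2 assms)

lemma has_real_derivative_inner_vector:
  fixes f g :: "real \<Rightarrow> 'a::real_inner"
  assumes "(f has_vector_derivative f') (at t)" "(g has_vector_derivative g') (at t)"
  shows "((\<lambda>t. f t \<bullet> g t) has_real_derivative (f t \<bullet> g' + f' \<bullet> g t)) (at t)"
proof -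
  have "((\<lambda>t. f t \<bullet> g t) has_derivative (\<lambda>h. f t \<bullet> (h *\<^sub>R g') + (h *\<^sub>R f') \<bullet> g t)) (at t)"
    using has_derivative_inner[OF assms[unfolded has_vector_derivative_def]] .
  then show ?thesis unfolding has_field_derivative_def
    by (rule has_derivative_eq_rhs) (auto simp: algebra_simps)
qed

lemma has_vector_derivative_cross3:
  assumes "(f has_vector_derivative f') (at t)" "(g has_vector_derivative g') (at t)"
  shows "((\<lambda>t. cross3 (f t) (g t)) has_vector_derivative (cross3 (f t) g' + cross3 f' (g t))) (at t)"
proof -
  have "((\<lambda>t. cross3 (f t) (g t)) has_derivative (\<lambda>h. cross3 (f t) (h *\<^sub>R g') + cross3 (h *\<^sub>R f') (g t))) (at t)"
    using bounded_bilinear.FDERIV[OF bounded_bilinear_cross3 assms[unfolded has_vector_derivative_def]] .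
  then show ?thesis unfolding has_vector_derivative_def
    by (rule has_derivative_eq_rhs) (auto simp: cross_mult_left cross_mult_right scaleR_right_distrib)
qed

lemma has_real_derivative_norm_vector:
  fixes f :: "real \<Rightarrow> real^3"
  assumes "(f has_vector_derivative f') (at t)" "f t \<noteq> 0"
  shows "((\<lambda>t. norm (f t)) has_real_derivative (f t \<bullet> f') / norm (f t)) (at t)"
proof -
  have p: "0 < f t \<bullet> f t" using assms(2) by simp
  have "((\<lambda>t. sqrt (f t \<bullet> f t)) has_real_derivative (inverse (sqrt (f t \<bullet> f t)) / 2) * (f t \<bullet> f' + f' \<bullet> f t)) (at t)"
    by (rule DERIV_chain2[OF DERIV_real_sqrt[OF p] has_real_derivative_inner_vector[OF assms(1) assms(1)]])
  moreover have "(\<lambda>t. sqrt (f t \<bullet> f t)) = (\<lambda>t. norm (f t))" by (simp add: norm_eq_sqrt_inner)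
  moreover have "(inverse (sqrt (f t \<bullet> f t)) / 2) * (f t \<bullet> f' + f' \<bullet> f t) = (f t \<bullet> f') / norm (f t)"
  proof -
    have nn: "norm (f t) = sqrt (f t \<bullet> f t)" by (rule norm_eq_sqrt_inner)
    have ic: "f' \<bullet> f t = f t \<bullet> f'" by (rule inner_commute)
    have aux: "inverse s / 2 * (x + x) = x / s" for s x :: real
      by (metis (no_types, lifting) divide_inverse_commute field_sum_of_halves mult.commute ring_class.ring_distribs(1))
    show ?thesis unfolding ic nn by (rule aux)
  qed
  ultimately show ?thesis by simp
qed

definition W_density :: "(real \<Rightarrow> real) \<Rightarrow> real^3 \<Rightarrow> real^3 \<Rightarrow> (2 \<Rightarrow> 2 \<Rightarrow> real^3) \<Rightarrow> real" where
  "W_density F X Y S = F ((mcurv_jet X Y S)\<^sup>2) * norm (cross3 X Y)"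

definition E_density :: "(real \<Rightarrow> real) \<Rightarrow> real^3 \<Rightarrow> real^3 \<Rightarrow> (2 \<Rightarrow> 2 \<Rightarrow> real^3) \<Rightarrow> real" where
  "E_density F X Y S = F (sqA_jet X Y S) * norm (cross3 X Y)"

definition W_density_deriv :: "(real \<Rightarrow> real) \<Rightarrow> (real \<Rightarrow> real) \<Rightarrow> real^3 \<Rightarrow> real^3 \<Rightarrow> (2 \<Rightarrow> 2 \<Rightarrow> real^3)
   \<Rightarrow> real^3 \<Rightarrow> real^3 \<Rightarrow> (2 \<Rightarrow> 2 \<Rightarrow> real^3) \<Rightarrow> real" where
  "W_density_deriv F F' X Y S X' Y' S' =
    (let N = cross3 X Y; N' = cross3 X Y' + cross3 X' Y; r = norm N; r' = (N \<bullet> N') / r;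
       H = mcurv_coeffs (X \<bullet> X) (X \<bullet> Y) (Y \<bullet> Y) (S 1 1 \<bullet> N) (S 1 2 \<bullet> N) (S 2 1 \<bullet> N) (S 2 2 \<bullet> N) r;
       H' = mcurv_coeffs_deriv (X \<bullet> X) (X \<bullet> Y) (Y \<bullet> Y) (S 1 1 \<bullet> N) (S 1 2 \<bullet> N) (S 2 1 \<bullet> N) (S 2 2 \<bullet> N) r
         (X \<bullet> X' + X' \<bullet> X) (X \<bullet> Y' + X' \<bullet> Y) (Y \<bullet> Y' + Y' \<bullet> Y)
         (S 1 1 \<bullet> N' + S' 1 1 \<bullet> N) (S 1 2 \<bullet> N' + S' 1 2 \<bullet> N) (S 2 1 \<bullet> N' + S' 2 1 \<bullet> N)
         (S 2 2 \<bullet> N' + S' 2 2 \<bullet> N) r'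
     in F' (H\<^sup>2) * (2 * H * H') * r + F (H\<^sup>2) * r')"

definition E_density_deriv :: "(real \<Rightarrow> real) \<Rightarrow> (real \<Rightarrow> real) \<Rightarrow> real^3 \<Rightarrow> real^3 \<Rightarrow> (2 \<Rightarrow> 2 \<Rightarrow> real^3)
   \<Rightarrow> real^3 \<Rightarrow> real^3 \<Rightarrow> (2 \<Rightarrow> 2 \<Rightarrow> real^3) \<Rightarrow> real" where
  "E_density_deriv F F' X Y S X' Y' S' =
    (let N = cross3 X Y; N' = cross3 X Y' + cross3 X' Y; r = norm N; r' = (N \<bullet> N') / r;
       A = sqA_coeffs (X \<bullet> X) (X \<bullet> Y) (Y \<bullet> Y) (\<lambda>i j. S i j \<bullet> N) (N \<bullet> N);
       A' = sqA_coeffs_deriv (X \<bullet> X) (X \<bullet> Y) (Y \<bullet> Y) (\<lambda>i j. S i j \<bullet> N) (N \<bullet> N)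
         (X \<bullet> X' + X' \<bullet> X) (X \<bullet> Y' + X' \<bullet> Y) (Y \<bullet> Y' + Y' \<bullet> Y)
         (\<lambda>i j. S i j \<bullet> N' + S' i j \<bullet> N) (N \<bullet> N' + N' \<bullet> N)
     in F' A * A' * r + F A * r')"

lemma has_real_derivative_W_density:
  assumes F: "\<And>s. (F has_real_derivative F' s) (at s)"
    and N: "cross3 (X + t *\<^sub>R X') (Y + t *\<^sub>R Y') \<noteq> 0"
  shows "((\<lambda>t. W_density F (X + t *\<^sub>R X') (Y + t *\<^sub>R Y') (\<lambda>i j. S i j + t *\<^sub>R S' i j)) has_real_derivative
    W_density_deriv F F' (X + t *\<^sub>R X') (Y + t *\<^sub>R Y') (\<lambda>i j. S i j + t *\<^sub>R S' i j) X' Y' S') (at t)"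
proof -
  have line: "((\<lambda>t. V + t *\<^sub>R V') has_vector_derivative V') (at t)" for V V' :: "real^3"
    by (auto intro!: derivative_eq_intros)
  note cr = has_vector_derivative_cross3[OF line line]
  note inner = has_real_derivative_inner_vector
  have D: "(X + t *\<^sub>R X') \<bullet> (X + t *\<^sub>R X') * ((Y + t *\<^sub>R Y') \<bullet> (Y + t *\<^sub>R Y'))
      - (X + t *\<^sub>R X') \<bullet> (Y + t *\<^sub>R Y') * ((X + t *\<^sub>R X') \<bullet> (Y + t *\<^sub>R Y')) \<noteq> 0"
    using gram_det_nonzero[OF N] by (simp add: gram_det_def)
  have r: "norm (cross3 (X + t *\<^sub>R X') (Y + t *\<^sub>R Y')) \<noteq> 0" using N by simp
  have H: "((\<lambda>t. mcurv_jet (X + t *\<^sub>R X') (Y + t *\<^sub>R Y') (\<lambda>i j. S i j + t *\<^sub>R S' i j)) has_real_derivative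
     (let Xt = X + t *\<^sub>R X'; Yt = Y + t *\<^sub>R Y'; St = (\<lambda>i j. S i j + t *\<^sub>R S' i j);
     N = cross3 Xt Yt; N' = cross3 Xt Y' + cross3 X' Yt; r = norm N; r' = (N \<bullet> N') / r
     in mcurv_coeffs_deriv (Xt \<bullet> Xt) (Xt \<bullet> Yt) (Yt \<bullet> Yt) (St 1 1 \<bullet> N) (St 1 2 \<bullet> N) (St 2 1 \<bullet> N) (St 2 2 \<bullet> N) r
       (Xt \<bullet> X' + X' \<bullet> Xt) (Xt \<bullet> Y' + X' \<bullet> Yt) (Yt \<bullet> Y' + Y' \<bullet> Yt)
       (St 1 1 \<bullet> N' + S' 1 1 \<bullet> N) (St 1 2 \<bullet> N' + S' 1 2 \<bullet> N) (St 2 1 \<bullet> N' + S' 2 1 \<bullet> N)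
       (St 2 2 \<bullet> N' + S' 2 2 \<bullet> N) r')) (at t)"
    unfolding mcurv_jet_eq_coeffs Let_def
    by (rule has_real_derivative_mcurv_coeffs[OF inner[OF line line] inner[OF line line] inner[OF line line]
          inner[OF line cr] inner[OF line cr] inner[OF line cr] inner[OF line cr]
          has_real_derivative_norm_vector[OF cr N] D r])
  show ?thesis
    unfolding W_density_def
    apply (rule DERIV_cong)
     apply (rule DERIV_mult DERIV_chain2[OF F] DERIV_power H has_real_derivative_norm_vector[OF cr N])+
    apply (simp add: W_density_deriv_def Let_def mcurv_jet_eq_coeffs algebra_simps)
    done
qed

lemma has_real_derivative_E_density:
  assumes F: "\<And>s. (F has_real_derivative F' s) (at s)"
    and N: "cross3 (X + t *\<^sub>R X') (Y + t *\<^sub>R Y') \<noteq> 0"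
  shows "((\<lambda>t. E_density F (X + t *\<^sub>R X') (Y + t *\<^sub>R Y') (\<lambda>i j. S i j + t *\<^sub>R S' i j)) has_real_derivative
    E_density_deriv F F' (X + t *\<^sub>R X') (Y + t *\<^sub>R Y') (\<lambda>i j. S i j + t *\<^sub>R S' i j) X' Y' S') (at t)"
proof -
  have line: "((\<lambda>t. V + t *\<^sub>R V') has_vector_derivative V') (at t)" for V V' :: "real^3"
    by (auto intro!: derivative_eq_intros)
  note cr = has_vector_derivative_cross3[OF line line]
  note inner = has_real_derivative_inner_vector
  have D: "(X + t *\<^sub>R X') \<bullet> (X + t *\<^sub>R X') * ((Y + t *\<^sub>R Y') \<bullet> (Y + t *\<^sub>R Y'))
      - (X + t *\<^sub>R X') \<bullet> (Y + t *\<^sub>R Y') * ((X + t *\<^sub>R X') \<bullet> (Y + t *\<^sub>R Y')) \<noteq> 0"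
    using gram_det_nonzero[OF N] by (simp add: gram_det_def)
  have q: "cross3 (X + t *\<^sub>R X') (Y + t *\<^sub>R Y') \<bullet> cross3 (X + t *\<^sub>R X') (Y + t *\<^sub>R Y') \<noteq> 0"
    using N by simp
  have A: "((\<lambda>t. sqA_jet (X + t *\<^sub>R X') (Y + t *\<^sub>R Y') (\<lambda>i j. S i j + t *\<^sub>R S' i j)) has_real_derivative
     (let Xt = X + t *\<^sub>R X'; Yt = Y + t *\<^sub>R Y'; St = (\<lambda>i j. S i j + t *\<^sub>R S' i j);
     N = cross3 Xt Yt; N' = cross3 Xt Y' + cross3 X' Yt
     in sqA_coeffs_deriv (Xt \<bullet> Xt) (Xt \<bullet> Yt) (Yt \<bullet> Yt) (\<lambda>i j. St i j \<bullet> N) (N \<bullet> N)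
       (Xt \<bullet> X' + X' \<bullet> Xt) (Xt \<bullet> Y' + X' \<bullet> Yt) (Yt \<bullet> Y' + Y' \<bullet> Yt)
       (\<lambda>i j. St i j \<bullet> N' + S' i j \<bullet> N) (N \<bullet> N' + N' \<bullet> N))) (at t)"
    unfolding sqA_jet_eq_coeffs Let_def
    by (rule has_real_derivative_sqA_coeffs[OF inner[OF line line] inner[OF line line] inner[OF line line]
          inner[OF line cr] inner[OF cr cr] D q])
  show ?thesis
    unfolding E_density_def
    apply (rule DERIV_cong)
     apply (rule DERIV_mult DERIV_chain2[OF F] A has_real_derivative_norm_vector[OF cr N])+
    apply (simp add: E_density_deriv_def Let_def sqA_jet_eq_coeffs algebra_simps)
    done
qed

lemma continuous_on_compose_UNIV:
  "continuous_on UNIV F \<Longrightarrow> continuous_on T g \<Longrightarrow> continuous_on T (\<lambda>z. F (g z))"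
  by (rule continuous_on_compose2[of UNIV F T g]) auto

context
  fixes T :: "'z::t2_space set" and X Y X' Y' :: "'z \<Rightarrow> real^3" and S S' :: "'z \<Rightarrow> 2 \<Rightarrow> 2 \<Rightarrow> real^3"
  assumes cont: "continuous_on T X" "continuous_on T Y" "\<And>i j. continuous_on T (\<lambda>z. S z i j)"
    and nondeg: "\<And>z. z \<in> T \<Longrightarrow> cross3 (X z) (Y z) \<noteq> 0"
begin

lemma continuous_on_W_density:
  assumes "continuous_on UNIV F"
  shows "continuous_on T (\<lambda>z. W_density F (X z) (Y z) (S z))"
  unfolding W_density_def mcurv_jet_eq_coeffs using nondeg gram_det_nonzero[OF nondeg]
  by (intro continuous_intros continuous_on_mcurv_coeffs continuous_on_cross cont
      continuous_on_compose_UNIV[OF assms]) (auto simp: gram_det_def)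

lemma continuous_on_E_density:
  assumes "continuous_on UNIV F"
  shows "continuous_on T (\<lambda>z. E_density F (X z) (Y z) (S z))"
  unfolding E_density_def sqA_jet_eq_coeffs sqA_coeffs_def using nondeg gram_det_nonzero[OF nondeg]
  by (intro continuous_intros continuous_on_sqA_numer continuous_on_cross cont
      continuous_on_compose_UNIV[OF assms]) (auto simp: gram_det_def)

context
  assumes cont': "continuous_on T X'" "continuous_on T Y'" "\<And>i j. continuous_on T (\<lambda>z. S' z i j)"
begin

lemma continuous_on_W_density_deriv:
  assumes "continuous_on UNIV F" "continuous_on UNIV F'"
  shows "continuous_on T (\<lambda>z. W_density_deriv F F' (X z) (Y z) (S z) (X' z) (Y' z) (S' z))"
  unfolding W_density_deriv_def Let_def using nondeg gram_det_nonzero[OF nondeg]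
  by (intro continuous_intros continuous_on_mcurv_coeffs continuous_on_mcurv_coeffs_deriv continuous_on_cross cont cont'
      continuous_on_compose_UNIV[OF assms(1)] continuous_on_compose_UNIV[OF assms(2)])
    (auto simp: gram_det_def)

lemma continuous_on_E_density_deriv:
  assumes "continuous_on UNIV F" "continuous_on UNIV F'"
  shows "continuous_on T (\<lambda>z. E_density_deriv F F' (X z) (Y z) (S z) (X' z) (Y' z) (S' z))"
  unfolding E_density_deriv_def Let_def sqA_coeffs_def sqA_coeffs_deriv_def using nondeg gram_det_nonzero[OF nondeg]
  by (intro continuous_intros continuous_on_sqA_numer continuous_on_sqA_numer_deriv continuous_on_cross cont cont'
      continuous_on_compose_UNIV[OF assms(1)] continuous_on_compose_UNIV[OF assms(2)])
    (auto simp: gram_det_def)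

end

end

section \<open>Orthogonal frames\<close>

lemma cross3_cross3_left: "cross3 (cross3 a b) c = (a \<bullet> c) *\<^sub>R b - (b \<bullet> c) *\<^sub>R a"
  by (simp add: cross3_simps forall_3)

lemma eq_0_if_orthogonal_frame:
  assumes "w \<bullet> X = 0" "w \<bullet> Y = 0" "w \<bullet> cross3 X Y = 0" "cross3 X Y \<noteq> 0"
  shows "w = 0"
proof -
  have "cross3 (cross3 X Y) w = 0" using assms by (simp add: cross3_cross3_left inner_commute)
  then have "(norm (cross3 (cross3 X Y) w))\<^sup>2 + (cross3 X Y \<bullet> w)\<^sup>2 = 0" using assms(3) by (simp add: inner_commute)
  then have "(norm (cross3 X Y) * norm w)\<^sup>2 = 0" using norm_cross_dot by metis
  then show ?thesis using assms(4) by simp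
qed

locale conformal_frame =
  fixes X Y :: "real^3" and E :: real
  assumes XX: "X \<bullet> X = E" and YY: "Y \<bullet> Y = E" and XY: "X \<bullet> Y = 0" and E_pos: "E > 0"
begin

definition \<nu> :: "real^3" where "\<nu> = (1 / E) *\<^sub>R cross3 X Y"

lemma inner_cross3_XY: "cross3 X Y \<bullet> cross3 X Y = E * E"
  using gram_det_eq_inner_cross3[of X Y] by (simp add: gram_det_def XX YY XY)

lemma norm_cross3_XY: "norm (cross3 X Y) = E"
proof -
  have "(norm (cross3 X Y))^2 = E^2"
    unfolding power2_norm_eq_inner inner_cross3_XY by (simp add: power2_eq_square)
  then show ?thesis using E_pos by simp
qed

lemma cross3_XY_nonzero: "cross3 X Y \<noteq> 0"
  using inner_cross3_XY E_pos by auto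

lemma cross3_frame:
  "cross3 X X = 0" "cross3 Y Y = 0" "cross3 \<nu> \<nu> = 0"
  "cross3 X Y = E *\<^sub>R \<nu>" "cross3 Y X = - (E *\<^sub>R \<nu>)"
  "cross3 \<nu> X = Y" "cross3 X \<nu> = - Y" "cross3 Y \<nu> = X" "cross3 \<nu> Y = - X"
proof -
  show "cross3 X Y = E *\<^sub>R \<nu>" using E_pos by (simp add: \<nu>_def)
  then show "cross3 Y X = - (E *\<^sub>R \<nu>)" using cross_skew by metis
  show "cross3 \<nu> X = Y"
    using E_pos by (simp add: \<nu>_def cross_mult_left cross3_cross3_left XX XY inner_commute)
  then show "cross3 X \<nu> = - Y" using cross_skew by metis
  show "cross3 Y \<nu> = X"
    using E_pos by (simp add: \<nu>_def cross_mult_right cross_skew[of Y] cross3_cross3_left XY YY)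
  then show "cross3 \<nu> Y = - X" using cross_skew by metis
qed simp_all

lemma inner_frame:
  "X \<bullet> X = E" "Y \<bullet> Y = E" "X \<bullet> Y = 0" "Y \<bullet> X = 0" "\<nu> \<bullet> \<nu> = 1"
  "\<nu> \<bullet> X = 0" "X \<bullet> \<nu> = 0" "\<nu> \<bullet> Y = 0" "Y \<bullet> \<nu> = 0"
  using XX YY XY inner_cross3_XY E_pos
  by (simp_all add: \<nu>_def dot_cross_self inner_commute)

lemma frame_decomp: "v = ((v \<bullet> X) / E) *\<^sub>R X + ((v \<bullet> Y) / E) *\<^sub>R Y + (v \<bullet> \<nu>) *\<^sub>R \<nu>"
proof -
  define w where "w = ((v \<bullet> X) / E) *\<^sub>R X + ((v \<bullet> Y) / E) *\<^sub>R Y + (v \<bullet> \<nu>) *\<^sub>R \<nu> - v"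
  have "w \<bullet> X = 0" "w \<bullet> Y = 0" "w \<bullet> \<nu> = 0"
    using E_pos by (simp_all add: w_def inner_diff_left inner_add_left inner_frame)
  then have "w = 0"
    using eq_0_if_orthogonal_frame[OF _ _ _ cross3_XY_nonzero] by (simp add: cross3_frame)
  then show ?thesis by (simp add: w_def)
qed

lemmas frame_simps = cross3_frame inner_frame inner_add_left inner_add_right inner_diff_left inner_diff_right
  cross_add_left cross_add_right cross_mult_left cross_mult_right left_diff_distrib right_diff_distrib

text \<open>The hypotheses on the components \<open>sx, sy, sz\<close> of the
  second derivatives \<open>S\<close> in the frame are those of a conformal immersion.\<close>

lemma area_deriv_in_frame:
  assumes e: "e = ex *\<^sub>R X + ey *\<^sub>R Y + ez *\<^sub>R \<nu>"
  shows "(cross3 X Y \<bullet> (cross3 X (a2 *\<^sub>R e) + cross3 (a1 *\<^sub>R e) Y)) / norm (cross3 X Y)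
     = (X \<bullet> e) * a1 + (Y \<bullet> e) * a2"
  using E_pos unfolding norm_cross3_XY e by (simp add: frame_simps field_simps)

lemma mcurv_deriv_in_frame:
  fixes ph :: "2 \<Rightarrow> 2 \<Rightarrow> real"
  assumes e: "e = ex *\<^sub>R X + ey *\<^sub>R Y + ez *\<^sub>R \<nu>"
    and S: "S = (\<lambda>i j. sx i j *\<^sub>R X + sy i j *\<^sub>R Y + sz i j *\<^sub>R \<nu>)"
    and rel: "sx 2 1 = sx 1 2" "sx 2 2 = - sx 1 1" "sy 1 1 = - sx 1 2" "sy 1 2 = sx 1 1"
      "sy 2 1 = sx 1 1" "sy 2 2 = sx 1 2" "sz 2 1 = sz 1 2"
  shows "mcurv_coeffs_deriv (X \<bullet> X) (X \<bullet> Y) (Y \<bullet> Y) (S 1 1 \<bullet> cross3 X Y) (S 1 2 \<bullet> cross3 X Y)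
      (S 2 1 \<bullet> cross3 X Y) (S 2 2 \<bullet> cross3 X Y) (norm (cross3 X Y))
      (X \<bullet> (a1 *\<^sub>R e) + (a1 *\<^sub>R e) \<bullet> X) (X \<bullet> (a2 *\<^sub>R e) + (a1 *\<^sub>R e) \<bullet> Y) (Y \<bullet> (a2 *\<^sub>R e) + (a2 *\<^sub>R e) \<bullet> Y)
      (S 1 1 \<bullet> (cross3 X (a2 *\<^sub>R e) + cross3 (a1 *\<^sub>R e) Y) + (ph 1 1 *\<^sub>R e) \<bullet> cross3 X Y)
      (S 1 2 \<bullet> (cross3 X (a2 *\<^sub>R e) + cross3 (a1 *\<^sub>R e) Y) + (ph 1 2 *\<^sub>R e) \<bullet> cross3 X Y)
      (S 2 1 \<bullet> (cross3 X (a2 *\<^sub>R e) + cross3 (a1 *\<^sub>R e) Y) + (ph 2 1 *\<^sub>R e) \<bullet> cross3 X Y)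
      (S 2 2 \<bullet> (cross3 X (a2 *\<^sub>R e) + cross3 (a1 *\<^sub>R e) Y) + (ph 2 2 *\<^sub>R e) \<bullet> cross3 X Y)
      ((cross3 X Y \<bullet> (cross3 X (a2 *\<^sub>R e) + cross3 (a1 *\<^sub>R e) Y)) / norm (cross3 X Y)) * (2 * E)
    = \<nu> \<bullet> e * (ph 1 1 + ph 2 2)
      + 2 * ((- ((\<nu> \<bullet> S 1 1) / E) *\<^sub>R X - ((\<nu> \<bullet> S 1 2) / E) *\<^sub>R Y) \<bullet> e * a1
           + (- ((\<nu> \<bullet> S 2 1) / E) *\<^sub>R X - ((\<nu> \<bullet> S 2 2) / E) *\<^sub>R Y) \<bullet> e * a2)"
  using E_pos unfolding norm_cross3_XY mcurv_coeffs_deriv_def e S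
  by (simp add: frame_simps rel) (simp add: field_simps power2_eq_square)

lemma sqA_deriv_in_frame:
  fixes ph :: "2 \<Rightarrow> 2 \<Rightarrow> real"
  assumes e: "e = ex *\<^sub>R X + ey *\<^sub>R Y + ez *\<^sub>R \<nu>"
    and S: "S = (\<lambda>i j. sx i j *\<^sub>R X + sy i j *\<^sub>R Y + sz i j *\<^sub>R \<nu>)"
    and rel: "sx 2 1 = sx 1 2" "sx 2 2 = - sx 1 1" "sy 1 1 = - sx 1 2" "sy 1 2 = sx 1 1"
      "sy 2 1 = sx 1 1" "sy 2 2 = sx 1 2" "sz 2 1 = sz 1 2"
    and ph: "ph 2 1 = ph 1 2"
  shows "sqA_coeffs_deriv (X \<bullet> X) (X \<bullet> Y) (Y \<bullet> Y) (\<lambda>i j. S i j \<bullet> cross3 X Y) (cross3 X Y \<bullet> cross3 X Y)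
      (X \<bullet> (a1 *\<^sub>R e) + (a1 *\<^sub>R e) \<bullet> X) (X \<bullet> (a2 *\<^sub>R e) + (a1 *\<^sub>R e) \<bullet> Y) (Y \<bullet> (a2 *\<^sub>R e) + (a2 *\<^sub>R e) \<bullet> Y)
      (\<lambda>i j. S i j \<bullet> (cross3 X (a2 *\<^sub>R e) + cross3 (a1 *\<^sub>R e) Y) + (ph i j *\<^sub>R e) \<bullet> cross3 X Y)
      (cross3 X Y \<bullet> (cross3 X (a2 *\<^sub>R e) + cross3 (a1 *\<^sub>R e) Y) + (cross3 X (a2 *\<^sub>R e) + cross3 (a1 *\<^sub>R e) Y) \<bullet> cross3 X Y)
     * E
    = (let V = (\<lambda>i::2. if i = 1 then X else Y); a = (\<lambda>i::2. if i = 1 then a1 else a2);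
           dn = (\<lambda>k. - ((\<nu> \<bullet> S k 1) / E) *\<^sub>R X - ((\<nu> \<bullet> S k 2) / E) *\<^sub>R Y);
           chi = (\<lambda>i. (2 / E) * (\<nu> \<bullet> e) * a i);
           dchi = (\<lambda>i k. 2 * (- (2 * (X \<bullet> S k 1)) / (E * E) * (\<nu> \<bullet> e) * a i
                      + (1 / E) * ((dn k \<bullet> e) * a i + (\<nu> \<bullet> e) * ph k i)))
       in (\<Sum>i\<in>UNIV. - (a i * (2 / E) * (\<Sum>j\<in>UNIV. (dn i \<bullet> dn j) * (V j \<bullet> e)))
            - (\<Sum>k\<in>UNIV. chi i * (dn k \<bullet> S k i) + dchi i k * (dn k \<bullet> V i))))"
  using E_pos unfolding sqA_coeffs_deriv_def sqA_numer_deriv_def sqA_numer_def adjugate2_def e S Let_def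
  by (simp add: sum_2 frame_simps rel ph) (simp add: field_simps power2_eq_square)

end

section \<open>Conformal immersions\<close>

lemma pd_add_scaleR_smooth:
  assumes g: "g differentiable at p" and \<phi>: "smooth_on UNIV \<phi>"
  shows "pd i (\<lambda>x. g x + t *\<^sub>R (\<phi> x *\<^sub>R e)) p = pd i g p + t *\<^sub>R (pd i \<phi> p *\<^sub>R e)"
proof -
  have d\<phi>: "\<phi> differentiable at p" using smooth_on_imp_differentiable[OF \<phi>] by simp
  have "pd i (\<lambda>x. g x + t *\<^sub>R (\<phi> x *\<^sub>R e)) p = pd i g p + pd i (\<lambda>x. t *\<^sub>R (\<phi> x *\<^sub>R e)) p"
    by (rule pd_add[OF g]) (intro differentiable_scaleR differentiable_scaleR_left d\<phi> differentiable_const)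
  also have "pd i (\<lambda>x. t *\<^sub>R (\<phi> x *\<^sub>R e)) p = t *\<^sub>R pd i (\<lambda>x. \<phi> x *\<^sub>R e) p"
    by (rule pd_scaleR_right) (rule differentiable_scaleR_left[OF d\<phi>])
  finally show ?thesis unfolding pd_scaleR_left[OF d\<phi>] .
qed

lemma continuous_on_snd_compose:
  "continuous_on S f \<Longrightarrow> K \<subseteq> S \<Longrightarrow> continuous_on (T \<times> K) (\<lambda>z. f (snd z))"
  by (rule continuous_on_compose2[of S f _ snd]) (auto intro: continuous_intros)

locale conformal_immersion =
  fixes U :: "(real^2) set" and \<Phi> :: "real^2 \<Rightarrow> real^3" and lam :: "real^2 \<Rightarrow> real"
  assumes open_U: "open U" and smooth: "smooth_on U \<Phi>"
    and conformal: "\<And>p i j. p \<in> U \<Longrightarrow> pd i \<Phi> p \<bullet> pd j \<Phi> p = (if i = j then exp (2 * lam p) else 0)"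
begin

abbreviation E :: "real^2 \<Rightarrow> real" where "E p \<equiv> exp (2 * lam p)"

abbreviation hess :: "real^2 \<Rightarrow> 2 \<Rightarrow> 2 \<Rightarrow> real^3" where "hess p \<equiv> \<lambda>i j. pd i (pd j \<Phi>) p"

lemma inner_pd_self: "p \<in> U \<Longrightarrow> pd i \<Phi> p \<bullet> pd i \<Phi> p = E p"
  using conformal[of p i i] by simp

lemma inner_pd_1_2: "p \<in> U \<Longrightarrow> pd 1 \<Phi> p \<bullet> pd 2 \<Phi> p = 0"
  using conformal[of p 1 2] by simp

lemma conformal_frame_at: "p \<in> U \<Longrightarrow> conformal_frame (pd 1 \<Phi> p) (pd 2 \<Phi> p) (E p)"
  by unfold_locales (auto simp: inner_pd_self inner_pd_1_2)

lemma nrm_eq_frame_normal: "p \<in> U \<Longrightarrow> nrm \<Phi> p = conformal_frame.\<nu> (pd 1 \<Phi> p) (pd 2 \<Phi> p) (E p)"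
  using conformal_frame.norm_cross3_XY[OF conformal_frame_at]
  by (simp add: nrm_def conformal_frame.\<nu>_def[OF conformal_frame_at])

lemma cross3_pd_nonzero: "p \<in> U \<Longrightarrow> cross3 (pd 1 \<Phi> p) (pd 2 \<Phi> p) \<noteq> 0"
  using conformal_frame.cross3_XY_nonzero[OF conformal_frame_at] .

lemma smooth_pd: "smooth_on U (pd i \<Phi>)"
  using smooth_on_pd[OF smooth] .

lemma differentiable: "p \<in> U \<Longrightarrow> \<Phi> differentiable at p"
  using smooth_on_imp_differentiable[OF smooth] .

lemma differentiable_pd: "p \<in> U \<Longrightarrow> pd i \<Phi> differentiable at p"
  using smooth_on_imp_differentiable[OF smooth_pd] .

lemma continuous_on_pd: "continuous_on U (pd i \<Phi>)"
  using smooth_on_imp_continuous_on[OF smooth_pd] .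

lemma continuous_on_pd_pd: "continuous_on U (pd i (pd j \<Phi>))"
  using smooth_on_imp_continuous_on[OF smooth_on_pd[OF smooth_pd]] .

lemma hess_sym: "p \<in> U \<Longrightarrow> hess p 1 2 = hess p 2 1"
  using pd_commute_smooth_vec[OF open_U smooth] by simp

text \<open>Differentiating the conformality relations \<open>|\<Phi>\<^sub>1|\<^sup>2 = |\<Phi>\<^sub>2|\<^sup>2\<close> and \<open>\<Phi>\<^sub>1 \<bullet> \<Phi>\<^sub>2 = 0\<close>.\<close>

lemma hess_inner_pd_diag: assumes p: "p \<in> U" shows "hess p k 1 \<bullet> pd 1 \<Phi> p = hess p k 2 \<bullet> pd 2 \<Phi> p"
proof -
  have "pd k (\<lambda>q. pd 1 \<Phi> q \<bullet> pd 1 \<Phi> q) p = pd k (\<lambda>q. pd 2 \<Phi> q \<bullet> pd 2 \<Phi> q) p"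
    by (rule pd_cong_open[OF open_U p]) (simp add: inner_pd_self)
  then show ?thesis
    using pd_inner[OF differentiable_pd[OF p] differentiable_pd[OF p], of k 1 1]
      pd_inner[OF differentiable_pd[OF p] differentiable_pd[OF p], of k 2 2]
    by (simp add: inner_commute)
qed

lemma hess_inner_pd_offdiag:
  assumes p: "p \<in> U" shows "hess p k 1 \<bullet> pd 2 \<Phi> p + pd 1 \<Phi> p \<bullet> hess p k 2 = 0"
proof -
  have "pd k (\<lambda>q. pd 1 \<Phi> q \<bullet> pd 2 \<Phi> q) p = pd k (\<lambda>q. 0::real) p"
    by (rule pd_cong_open[OF open_U p]) (simp add: inner_pd_1_2)
  then show ?thesis using pd_inner[OF differentiable_pd[OF p] differentiable_pd[OF p], of k 1 2]
    by (simp add: pd_const inner_commute add.commute)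
qed

lemma hess_in_frame:
  assumes p: "p \<in> U"
  defines "\<nu> \<equiv> conformal_frame.\<nu> (pd 1 \<Phi> p) (pd 2 \<Phi> p) (E p)"
  shows "hess p = (\<lambda>i j. ((hess p i j \<bullet> pd 1 \<Phi> p) / E p) *\<^sub>R pd 1 \<Phi> p
           + ((hess p i j \<bullet> pd 2 \<Phi> p) / E p) *\<^sub>R pd 2 \<Phi> p + (hess p i j \<bullet> \<nu>) *\<^sub>R \<nu>)"
    and "(hess p 2 1 \<bullet> pd 1 \<Phi> p) / E p = (hess p 1 2 \<bullet> pd 1 \<Phi> p) / E p"
    and "(hess p 2 2 \<bullet> pd 1 \<Phi> p) / E p = - ((hess p 1 1 \<bullet> pd 1 \<Phi> p) / E p)"
    and "(hess p 1 1 \<bullet> pd 2 \<Phi> p) / E p = - ((hess p 1 2 \<bullet> pd 1 \<Phi> p) / E p)"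
    and "(hess p 1 2 \<bullet> pd 2 \<Phi> p) / E p = (hess p 1 1 \<bullet> pd 1 \<Phi> p) / E p"
    and "(hess p 2 1 \<bullet> pd 2 \<Phi> p) / E p = (hess p 1 1 \<bullet> pd 1 \<Phi> p) / E p"
    and "(hess p 2 2 \<bullet> pd 2 \<Phi> p) / E p = (hess p 1 2 \<bullet> pd 1 \<Phi> p) / E p"
    and "hess p 2 1 \<bullet> \<nu> = hess p 1 2 \<bullet> \<nu>"
proof -
  have s: "hess p 1 2 = hess p 2 1" using hess_sym[OF p] .
  have a1: "hess p 1 1 \<bullet> pd 1 \<Phi> p = hess p 1 2 \<bullet> pd 2 \<Phi> p"
    and a2: "hess p 2 1 \<bullet> pd 1 \<Phi> p = hess p 2 2 \<bullet> pd 2 \<Phi> p"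
    using hess_inner_pd_diag[OF p] by auto
  have b1: "hess p 1 1 \<bullet> pd 2 \<Phi> p + pd 1 \<Phi> p \<bullet> hess p 1 2 = 0"
    and b2: "hess p 2 1 \<bullet> pd 2 \<Phi> p + pd 1 \<Phi> p \<bullet> hess p 2 2 = 0"
    using hess_inner_pd_offdiag[OF p] by auto
  show "hess p = (\<lambda>i j. ((hess p i j \<bullet> pd 1 \<Phi> p) / E p) *\<^sub>R pd 1 \<Phi> p
           + ((hess p i j \<bullet> pd 2 \<Phi> p) / E p) *\<^sub>R pd 2 \<Phi> p + (hess p i j \<bullet> \<nu>) *\<^sub>R \<nu>)"
    unfolding \<nu>_def using conformal_frame.frame_decomp[OF conformal_frame_at[OF p]] by (intro ext) blast
  show "(hess p 2 1 \<bullet> pd 1 \<Phi> p) / E p = (hess p 1 2 \<bullet> pd 1 \<Phi> p) / E p" using s by simp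
  have "hess p 2 1 \<bullet> pd 2 \<Phi> p + hess p 2 2 \<bullet> pd 1 \<Phi> p = 0" using b2 by (simp add: inner_commute)
  moreover have "hess p 2 1 \<bullet> pd 2 \<Phi> p = hess p 1 1 \<bullet> pd 1 \<Phi> p" using a1 s by simp
  ultimately have "hess p 2 2 \<bullet> pd 1 \<Phi> p = - (hess p 1 1 \<bullet> pd 1 \<Phi> p)" by linarith
  then show "(hess p 2 2 \<bullet> pd 1 \<Phi> p) / E p = - ((hess p 1 1 \<bullet> pd 1 \<Phi> p) / E p)" by simp
  have "hess p 1 1 \<bullet> pd 2 \<Phi> p = - (hess p 1 2 \<bullet> pd 1 \<Phi> p)"
    using b1 by (simp add: inner_commute eq_neg_iff_add_eq_0)
  then show "(hess p 1 1 \<bullet> pd 2 \<Phi> p) / E p = - ((hess p 1 2 \<bullet> pd 1 \<Phi> p) / E p)" by simp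
  show "(hess p 1 2 \<bullet> pd 2 \<Phi> p) / E p = (hess p 1 1 \<bullet> pd 1 \<Phi> p) / E p" using a1 by simp
  show "(hess p 2 1 \<bullet> pd 2 \<Phi> p) / E p = (hess p 1 1 \<bullet> pd 1 \<Phi> p) / E p" using a1 s by simp
  show "(hess p 2 2 \<bullet> pd 2 \<Phi> p) / E p = (hess p 1 2 \<bullet> pd 1 \<Phi> p) / E p" using a2 s by simp
  show "hess p 2 1 \<bullet> \<nu> = hess p 1 2 \<bullet> \<nu>" using s by simp
qed

lemma differentiable_nrm: assumes p: "p \<in> U" shows "nrm \<Phi> differentiable at p"
proof -
  have N: "(\<lambda>q. cross3 (pd 1 \<Phi> q) (pd 2 \<Phi> q)) differentiable at p"
    using differentiable_pd[OF p] by (intro differentiable_cross3)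
  have "(\<lambda>q. norm (cross3 (pd 1 \<Phi> q) (pd 2 \<Phi> q))) differentiable at p"
    by (rule differentiable_compose[OF differentiable_norm_at[OF cross3_pd_nonzero[OF p]] N])
  then show ?thesis
    unfolding nrm_def[abs_def] using N cross3_pd_nonzero[OF p]
    by (intro differentiable_scaleR differentiable_divide) auto
qed

lemma weingarten:
  assumes p: "p \<in> U"
  shows "pd k (nrm \<Phi>) p = - ((nrm \<Phi> p \<bullet> hess p k 1) / E p) *\<^sub>R pd 1 \<Phi> p - ((nrm \<Phi> p \<bullet> hess p k 2) / E p) *\<^sub>R pd 2 \<Phi> p"
proof -
  interpret conformal_frame "pd 1 \<Phi> p" "pd 2 \<Phi> p" "E p" using conformal_frame_at[OF p] .
  note dn = differentiable_nrm[OF p] and d1 = differentiable_pd[OF p]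
  have "pd k (\<lambda>q. nrm \<Phi> q \<bullet> pd 1 \<Phi> q) p = pd k (\<lambda>q. 0::real) p"
    "pd k (\<lambda>q. nrm \<Phi> q \<bullet> pd 2 \<Phi> q) p = pd k (\<lambda>q. 0::real) p"
    "pd k (\<lambda>q. nrm \<Phi> q \<bullet> nrm \<Phi> q) p = pd k (\<lambda>q. 1::real) p"
    by (rule pd_cong_open[OF open_U p];
        simp add: nrm_eq_frame_normal conformal_frame.inner_frame[OF conformal_frame_at])+
  then have "pd k (nrm \<Phi>) p \<bullet> pd 1 \<Phi> p = - (nrm \<Phi> p \<bullet> hess p k 1)"
    "pd k (nrm \<Phi>) p \<bullet> pd 2 \<Phi> p = - (nrm \<Phi> p \<bullet> hess p k 2)"
    "pd k (nrm \<Phi>) p \<bullet> \<nu> = 0"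
    using pd_inner[OF dn d1, of k 1] pd_inner[OF dn d1, of k 2] pd_inner[OF dn dn, of k]
    by (simp_all add: pd_const nrm_eq_frame_normal[OF p] inner_commute)
  then show ?thesis using frame_decomp[of "pd k (nrm \<Phi>) p"] by simp
qed

lemma continuous_on_E: "continuous_on U E"
proof -
  have "continuous_on U (\<lambda>p. pd 1 \<Phi> p \<bullet> pd 1 \<Phi> p)" by (intro continuous_intros continuous_on_pd)
  then show ?thesis using inner_pd_self by (metis (no_types, lifting) continuous_on_cong)
qed

lemma continuous_on_nrm: "continuous_on U (nrm \<Phi>)"
  unfolding nrm_def[abs_def] using cross3_pd_nonzero
  by (intro continuous_intros continuous_on_cross continuous_on_pd) auto

lemma continuous_on_pd_nrm: "continuous_on U (pd k (nrm \<Phi>))"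
proof -
  have "continuous_on U (\<lambda>p. - ((nrm \<Phi> p \<bullet> hess p k 1) / E p) *\<^sub>R pd 1 \<Phi> p
      - ((nrm \<Phi> p \<bullet> hess p k 2) / E p) *\<^sub>R pd 2 \<Phi> p)"
    by (intro continuous_intros continuous_on_nrm continuous_on_pd_pd continuous_on_pd continuous_on_E) auto
  then show ?thesis using weingarten by (metis (no_types, lifting) continuous_on_cong)
qed

lemma continuous_on_mcurv: "continuous_on U (mcurv \<Phi>)"
proof -
  have "continuous_on U (\<lambda>p. mcurv_jet (pd 1 \<Phi> p) (pd 2 \<Phi> p) (hess p))"
    unfolding mcurv_jet_eq_coeffs using cross3_pd_nonzero gram_det_nonzero[OF cross3_pd_nonzero]
    by (intro continuous_on_mcurv_coeffs continuous_intros continuous_on_pd continuous_on_pd_pd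
        continuous_on_cross) (auto simp: gram_det_def)
  then show ?thesis using mcurv_eq_mcurv_jet[OF cross3_pd_nonzero] by (metis (no_types, lifting) continuous_on_cong)
qed

lemma continuous_on_sqA: "continuous_on U (sqA \<Phi>)"
proof -
  have "continuous_on U (\<lambda>p. sqA_jet (pd 1 \<Phi> p) (pd 2 \<Phi> p) (hess p))"
    unfolding sqA_jet_eq_coeffs sqA_coeffs_def using cross3_pd_nonzero gram_det_nonzero[OF cross3_pd_nonzero]
    by (intro continuous_on_sqA_numer continuous_intros continuous_on_pd continuous_on_pd_pd
        continuous_on_cross) (auto simp: gram_det_def)
  then show ?thesis using sqA_eq_sqA_jet[OF cross3_pd_nonzero] by (metis (no_types, lifting) continuous_on_cong)
qed

lemma pd_variation:
  assumes "p \<in> U" "smooth_on UNIV \<phi>"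
  shows "pd i (\<lambda>x. \<Phi> x + t *\<^sub>R (\<phi> x *\<^sub>R e)) p = pd i \<Phi> p + t *\<^sub>R (pd i \<phi> p *\<^sub>R e)"
  by (rule pd_add_scaleR_smooth[OF differentiable[OF assms(1)] assms(2)])

lemma pd_pd_variation:
  assumes p: "p \<in> U" and \<phi>: "smooth_on UNIV \<phi>"
  shows "pd i (pd j (\<lambda>x. \<Phi> x + t *\<^sub>R (\<phi> x *\<^sub>R e))) p = pd i (pd j \<Phi>) p + t *\<^sub>R (pd i (pd j \<phi>) p *\<^sub>R e)"
proof -
  have "pd i (pd j (\<lambda>x. \<Phi> x + t *\<^sub>R (\<phi> x *\<^sub>R e))) p = pd i (\<lambda>x. pd j \<Phi> x + t *\<^sub>R (pd j \<phi> x *\<^sub>R e)) p"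
    by (rule pd_cong_open[OF open_U p]) (simp only: pd_variation[OF _ \<phi>])
  also have "\<dots> = pd i (pd j \<Phi>) p + t *\<^sub>R (pd i (pd j \<phi>) p *\<^sub>R e)"
    by (rule pd_add_scaleR_smooth[OF differentiable_pd[OF p] smooth_on_pd[OF \<phi>]])
  finally show ?thesis .
qed

text \<open>Small variations of a conformal immersion remain immersions on a compact set, since
  \<open>|\<Phi>\<^sub>1 \<times> \<Phi>\<^sub>2| = E\<close> is bounded below there.\<close>

lemma variation_nondegenerate:
  assumes K: "compact K" "K \<subseteq> U" and cX: "continuous_on K X'" "continuous_on K Y'"
  obtains \<delta> where "\<delta> > 0"
    "\<And>t p. t \<in> cball 0 \<delta> \<Longrightarrow> p \<in> K \<Longrightarrow> cross3 (pd 1 \<Phi> p + t *\<^sub>R X' p) (pd 2 \<Phi> p + t *\<^sub>R Y' p) \<noteq> 0"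
proof (cases "K = {}")
  case True then show ?thesis using that[of 1] by auto
next
  case False
  obtain p0 where p0: "p0 \<in> K" "\<forall>p\<in>K. E p0 \<le> E p"
    using continuous_attains_inf[OF K(1) False continuous_on_subset[OF continuous_on_E K(2)]] by blast
  define f where "f = (\<lambda>(t::real, p). norm (cross3 (pd 1 \<Phi> p + t *\<^sub>R X' p) (pd 2 \<Phi> p + t *\<^sub>R Y' p)))"
  have cXK: "continuous_on K (pd i \<Phi>)" for i using continuous_on_subset[OF continuous_on_pd K(2)] .
  have cf: "continuous_on (UNIV \<times> K) f"
    unfolding f_def case_prod_beta
    by (intro continuous_intros continuous_on_cross continuous_on_compose2[OF cXK]
        continuous_on_compose2[OF cX(1)] continuous_on_compose2[OF cX(2)]) auto
  have "E p0 / 2 > 0" by simp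
  from continuous_on_prod_compactE[OF cf K(1) _ this, of 0]
  obtain T0 where T0: "0 \<in> T0" "open T0" "\<forall>t\<in>T0 \<inter> UNIV. \<forall>p\<in>K. dist (f (t, p)) (f (0, p)) \<le> E p0 / 2"
    by auto
  obtain \<delta> where \<delta>: "\<delta> > 0" "cball 0 \<delta> \<subseteq> T0" using T0(1,2) open_contains_cball by blast
  show ?thesis
  proof (rule that[OF \<delta>(1)])
    fix t p assume t: "t \<in> cball (0::real) \<delta>" and p: "p \<in> K"
    have "f (0, p) = E p"
      using conformal_frame.norm_cross3_XY[OF conformal_frame_at] p K(2) by (auto simp: f_def)
    moreover have "dist (f (t, p)) (f (0, p)) \<le> E p0 / 2" using T0(3) \<delta>(2) t p by blast
    moreover have "E p \<ge> E p0" using p0 p by simp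
    ultimately have "f (t, p) > 0" using exp_gt_zero[of "2 * lam p0"] unfolding dist_real_def by argo
    then show "cross3 (pd 1 \<Phi> p + t *\<^sub>R X' p) (pd 2 \<Phi> p + t *\<^sub>R Y' p) \<noteq> 0" by (auto simp: f_def)
  qed
qed

end

section \<open>First variation\<close>

lemma critical_imp_deriv_eq_0:
  assumes "critical J U \<Phi>" "smooth_on UNIV \<phi>" "compact K" "K \<subseteq> U" "\<And>p. p \<notin> K \<Longrightarrow> \<phi> p = 0"
    and "((\<lambda>t. J (\<lambda>p. \<Phi> p + t *\<^sub>R (\<phi> p *\<^sub>R e)) K) has_real_derivative D) (at 0)"
  shows "D = 0"
proof -
  have "smooth_on UNIV (\<lambda>p. \<phi> p *\<^sub>R e)" "\<forall>p. p \<notin> K \<longrightarrow> \<phi> p *\<^sub>R e = 0"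
    using smooth_on_scaleR_left[OF assms(2)] assms(5) by auto
  then have "((\<lambda>t. J (\<lambda>p. \<Phi> p + t *\<^sub>R (\<phi> p *\<^sub>R e)) K) has_real_derivative 0) (at 0)"
    using assms(1,3,4) unfolding critical_def by blast
  then show ?thesis using DERIV_unique[OF assms(6)] by simp
qed

context conformal_immersion
begin

text \<open>First variation of an integral functional whose density \<open>\<rho>\<close> depends only on the 2-jet of the
  immersion through a function \<open>L\<close> with continuous directional derivative \<open>dL\<close>: differentiate
  under the integral sign.\<close>

lemma has_real_derivative_jet_integral:
  fixes L :: "real^3 \<Rightarrow> real^3 \<Rightarrow> (2 \<Rightarrow> 2 \<Rightarrow> real^3) \<Rightarrow> real"
    and dL :: "real^3 \<Rightarrow> real^3 \<Rightarrow> (2 \<Rightarrow> 2 \<Rightarrow> real^3) \<Rightarrow> real^3 \<Rightarrow> real^3 \<Rightarrow> (2 \<Rightarrow> 2 \<Rightarrow> real^3) \<Rightarrow> real"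
  assumes \<rho>: "\<And>\<Psi> p. cross3 (pd 1 \<Psi> p) (pd 2 \<Psi> p) \<noteq> 0 \<Longrightarrow>
      \<rho> \<Psi> p = L (pd 1 \<Psi> p) (pd 2 \<Psi> p) (\<lambda>i j. pd i (pd j \<Psi>) p)"
    and dL: "\<And>X Y S X' Y' S' t. cross3 (X + t *\<^sub>R X') (Y + t *\<^sub>R Y') \<noteq> 0 \<Longrightarrow>
      ((\<lambda>t. L (X + t *\<^sub>R X') (Y + t *\<^sub>R Y') (\<lambda>i j. S i j + t *\<^sub>R S' i j)) has_real_derivative
        dL (X + t *\<^sub>R X') (Y + t *\<^sub>R Y') (\<lambda>i j. S i j + t *\<^sub>R S' i j) X' Y' S') (at t)"
    and L_cont: "\<And>(T :: (real^2) set) X Y S. continuous_on T X \<Longrightarrow> continuous_on T Y \<Longrightarrow>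
      (\<And>i j. continuous_on T (\<lambda>z. S z i j)) \<Longrightarrow> (\<And>z. z \<in> T \<Longrightarrow> cross3 (X z) (Y z) \<noteq> 0) \<Longrightarrow>
      continuous_on T (\<lambda>z. L (X z) (Y z) (S z))"
    and dL_cont: "\<And>(T :: (real \<times> (real^2)) set) X Y S X' Y' S'. continuous_on T X \<Longrightarrow> continuous_on T Y \<Longrightarrow>
      (\<And>i j. continuous_on T (\<lambda>z. S z i j)) \<Longrightarrow> (\<And>z. z \<in> T \<Longrightarrow> cross3 (X z) (Y z) \<noteq> 0) \<Longrightarrow>
      continuous_on T X' \<Longrightarrow> continuous_on T Y' \<Longrightarrow> (\<And>i j. continuous_on T (\<lambda>z. S' z i j)) \<Longrightarrow>
      continuous_on T (\<lambda>z. dL (X z) (Y z) (S z) (X' z) (Y' z) (S' z))"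
    and \<phi>: "smooth_on UNIV \<phi>" and K: "compact K" "K \<subseteq> U"
  shows "((\<lambda>t. integral K (\<rho> (\<lambda>p. \<Phi> p + t *\<^sub>R (\<phi> p *\<^sub>R e)))) has_real_derivative
    integral K (\<lambda>p. dL (pd 1 \<Phi> p) (pd 2 \<Phi> p) (hess p) (pd 1 \<phi> p *\<^sub>R e) (pd 2 \<phi> p *\<^sub>R e)
       (\<lambda>i j. pd i (pd j \<phi>) p *\<^sub>R e))) (at 0)"
proof -
  define X' where "X' p = pd 1 \<phi> p *\<^sub>R e" for p
  define Y' where "Y' p = pd 2 \<phi> p *\<^sub>R e" for p
  define S' where "S' p = (\<lambda>i j. pd i (pd j \<phi>) p *\<^sub>R e)" for p
  have c\<phi>: "continuous_on UNIV (pd i \<phi>)" "continuous_on UNIV (pd i (pd j \<phi>))" for i j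
    using smooth_on_imp_continuous_on smooth_on_pd \<phi> by blast+
  have cX': "continuous_on UNIV X'" "continuous_on UNIV Y'" "continuous_on UNIV (\<lambda>p. S' p i j)" for i j
    unfolding X'_def Y'_def S'_def by (auto intro!: continuous_intros c\<phi>)
  obtain \<delta> where \<delta>: "\<delta> > 0"
    and nondeg: "\<And>t p. t \<in> cball 0 \<delta> \<Longrightarrow> p \<in> K \<Longrightarrow> cross3 (pd 1 \<Phi> p + t *\<^sub>R X' p) (pd 2 \<Phi> p + t *\<^sub>R Y' p) \<noteq> 0"
    using variation_nondegenerate[OF K continuous_on_subset[OF cX'(1)] continuous_on_subset[OF cX'(2)]] by auto
  define G where "G t p = L (pd 1 \<Phi> p + t *\<^sub>R X' p) (pd 2 \<Phi> p + t *\<^sub>R Y' p) (\<lambda>i j. hess p i j + t *\<^sub>R S' p i j)"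
    for t p
  define G' where "G' t p = dL (pd 1 \<Phi> p + t *\<^sub>R X' p) (pd 2 \<Phi> p + t *\<^sub>R Y' p) (\<lambda>i j. hess p i j + t *\<^sub>R S' p i j)
      (X' p) (Y' p) (S' p)" for t p
  have deriv: "((\<lambda>t. integral K (G t)) has_real_derivative integral K (G' 0)) (at 0)"
  proof (rule has_real_derivative_integral_compact[OF K(1) \<delta>])
    show "((\<lambda>t. G t p) has_real_derivative G' t p) (at t)" if "t \<in> cball 0 \<delta>" "p \<in> K" for t p
      unfolding G_def G'_def using nondeg[OF that] by (rule dL)
    have "continuous_on (cball 0 \<delta> \<times> K) (\<lambda>z. G' (fst z) (snd z))"
      unfolding G'_def
      by (rule dL_cont; (intro continuous_intros continuous_on_snd_compose[OF continuous_on_pd]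
          continuous_on_snd_compose[OF continuous_on_pd_pd] continuous_on_snd_compose[OF cX'(1)]
          continuous_on_snd_compose[OF cX'(2)] continuous_on_snd_compose[OF cX'(3)])?;
          use nondeg K(2) in auto)
    then show "continuous_on (cball 0 \<delta> \<times> K) (\<lambda>(t, p). G' t p)"
      by (simp add: case_prod_beta)
    show "continuous_on K (G t)" if "t \<in> cball 0 \<delta>" for t
      unfolding G_def
      by (rule L_cont; (intro continuous_intros continuous_on_subset[OF continuous_on_pd]
          continuous_on_subset[OF continuous_on_pd_pd] continuous_on_subset[OF cX'(1)]
          continuous_on_subset[OF cX'(2)] continuous_on_subset[OF cX'(3)])?;
          use nondeg[OF that] K(2) in auto)
  qed
  have eq: "integral K (G t) = integral K (\<rho> (\<lambda>p. \<Phi> p + t *\<^sub>R (\<phi> p *\<^sub>R e)))" if "t \<in> ball 0 \<delta>" for t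
  proof (rule integral_cong)
    fix p assume p: "p \<in> K"
    then have "p \<in> U" using K(2) by auto
    note var = pd_variation[OF this \<phi>, of _ t e] pd_pd_variation[OF this \<phi>, of _ _ t e]
    have N: "cross3 (pd 1 (\<lambda>p. \<Phi> p + t *\<^sub>R (\<phi> p *\<^sub>R e)) p) (pd 2 (\<lambda>p. \<Phi> p + t *\<^sub>R (\<phi> p *\<^sub>R e)) p) \<noteq> 0"
      using nondeg[of t p] that p unfolding var X'_def Y'_def by auto
    show "G t p = \<rho> (\<lambda>p. \<Phi> p + t *\<^sub>R (\<phi> p *\<^sub>R e)) p"
      unfolding \<rho>[OF N] var G_def X'_def Y'_def S'_def ..
  qed
  have "((\<lambda>t. integral K (\<rho> (\<lambda>p. \<Phi> p + t *\<^sub>R (\<phi> p *\<^sub>R e)))) has_real_derivative integral K (G' 0)) (at 0)"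
    by (rule has_field_derivative_transform_within_open[OF deriv, of "ball 0 \<delta>"]) (use \<delta> eq in auto)
  then show ?thesis by (simp add: G'_def[abs_def] X'_def Y'_def S'_def)
qed

lemma has_real_derivative_WF_variation:
  assumes F: "\<And>s. (F has_real_derivative F' s) (at s)" and F': "continuous_on UNIV F'"
    and \<phi>: "smooth_on UNIV \<phi>" and K: "compact K" "K \<subseteq> U"
  shows "((\<lambda>t. WF F (\<lambda>p. \<Phi> p + t *\<^sub>R (\<phi> p *\<^sub>R e)) K) has_real_derivative
    integral K (\<lambda>p. W_density_deriv F F' (pd 1 \<Phi> p) (pd 2 \<Phi> p) (hess p) (pd 1 \<phi> p *\<^sub>R e) (pd 2 \<phi> p *\<^sub>R e)
       (\<lambda>i j. pd i (pd j \<phi>) p *\<^sub>R e))) (at 0)"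
proof -
  have F_cont: "continuous_on UNIV F"
    using F by (meson DERIV_isCont continuous_at_imp_continuous_on)
  show ?thesis
    unfolding WF_def
  proof (rule has_real_derivative_jet_integral[where L="W_density F" and dL="W_density_deriv F F'"])
    show "F ((mcurv \<Psi> p)\<^sup>2) * area \<Psi> p = W_density F (pd 1 \<Psi> p) (pd 2 \<Psi> p) (\<lambda>i j. pd i (pd j \<Psi>) p)"
      if "cross3 (pd 1 \<Psi> p) (pd 2 \<Psi> p) \<noteq> 0" for \<Psi> p
      by (simp add: W_density_def mcurv_eq_mcurv_jet[OF that] area_def)
  qed (assumption | rule has_real_derivative_W_density[OF F] continuous_on_W_density[OF _ _ _ _ F_cont]
      continuous_on_W_density_deriv[OF _ _ _ _ _ _ _ F_cont F'] \<phi> K)+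
qed

lemma has_real_derivative_EF_variation:
  assumes F: "\<And>s. (F has_real_derivative F' s) (at s)" and F': "continuous_on UNIV F'"
    and \<phi>: "smooth_on UNIV \<phi>" and K: "compact K" "K \<subseteq> U"
  shows "((\<lambda>t. EF F (\<lambda>p. \<Phi> p + t *\<^sub>R (\<phi> p *\<^sub>R e)) K) has_real_derivative
    integral K (\<lambda>p. E_density_deriv F F' (pd 1 \<Phi> p) (pd 2 \<Phi> p) (hess p) (pd 1 \<phi> p *\<^sub>R e) (pd 2 \<phi> p *\<^sub>R e)
       (\<lambda>i j. pd i (pd j \<phi>) p *\<^sub>R e))) (at 0)"
proof -
  have F_cont: "continuous_on UNIV F"
    using F by (meson DERIV_isCont continuous_at_imp_continuous_on)
  show ?thesis
    unfolding EF_def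
  proof (rule has_real_derivative_jet_integral[where L="E_density F" and dL="E_density_deriv F F'"])
    show "F (sqA \<Psi> p) * area \<Psi> p = E_density F (pd 1 \<Psi> p) (pd 2 \<Psi> p) (\<lambda>i j. pd i (pd j \<Psi>) p)"
      if "cross3 (pd 1 \<Psi> p) (pd 2 \<Psi> p) \<noteq> 0" for \<Psi> p
      by (simp add: E_density_def sqA_eq_sqA_jet[OF that] area_def)
  qed (assumption | rule has_real_derivative_E_density[OF F] continuous_on_E_density[OF _ _ _ _ F_cont]
      continuous_on_E_density_deriv[OF _ _ _ _ _ _ _ F_cont F'] \<phi> K)+
qed

text \<open>The pointwise first variations of \<open>WF F\<close> and \<open>EF F\<close> in direction \<open>\<phi> e\<close>, after the Weingarten
  equations and the conformality relations have been used to simplify them.\<close>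

definition W_variation_density :: "(real \<Rightarrow> real) \<Rightarrow> (real \<Rightarrow> real) \<Rightarrow> (real^2 \<Rightarrow> real) \<Rightarrow> real^3 \<Rightarrow> real^2 \<Rightarrow> real" where
  "W_variation_density F F' \<phi> e p =
    F ((mcurv \<Phi> p)\<^sup>2) * (pd 1 \<Phi> p \<bullet> e * pd 1 \<phi> p + pd 2 \<Phi> p \<bullet> e * pd 2 \<phi> p)
    + mcurv \<Phi> p * F' ((mcurv \<Phi> p)\<^sup>2) * (nrm \<Phi> p \<bullet> e * (pd 1 (pd 1 \<phi>) p + pd 2 (pd 2 \<phi>) p)
        + 2 * (pd 1 (nrm \<Phi>) p \<bullet> e * pd 1 \<phi> p + pd 2 (nrm \<Phi>) p \<bullet> e * pd 2 \<phi> p))"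

definition E_variation_term ::
    "(real \<Rightarrow> real) \<Rightarrow> (real \<Rightarrow> real) \<Rightarrow> (real^2 \<Rightarrow> real) \<Rightarrow> real^3 \<Rightarrow> 2 \<Rightarrow> real^2 \<Rightarrow> real" where
  "E_variation_term F F' \<phi> e i p =
    pd i \<phi> p * (F (sqA \<Phi> p) * (pd i \<Phi> p \<bullet> e)
      - (2 / E p) * F' (sqA \<Phi> p) * (\<Sum>j\<in>UNIV. (pd i (nrm \<Phi>) p \<bullet> pd j (nrm \<Phi>) p) * (pd j \<Phi> p \<bullet> e)))
    - F' (sqA \<Phi> p) * (\<Sum>k\<in>UNIV. ((2 / E p) * (nrm \<Phi> p \<bullet> e) * pd i \<phi> p) * (pd k (nrm \<Phi>) p \<bullet> hess p k i)
        + (2 * (- (2 * (pd 1 \<Phi> p \<bullet> hess p k 1)) / (E p * E p) * (nrm \<Phi> p \<bullet> e) * pd i \<phi> p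
            + (1 / E p) * ((pd k (nrm \<Phi>) p \<bullet> e) * pd i \<phi> p + (nrm \<Phi> p \<bullet> e) * pd k (pd i \<phi>) p)))
          * (pd k (nrm \<Phi>) p \<bullet> pd i \<Phi> p))"

definition E_variation_density :: "(real \<Rightarrow> real) \<Rightarrow> (real \<Rightarrow> real) \<Rightarrow> (real^2 \<Rightarrow> real) \<Rightarrow> real^3 \<Rightarrow> real^2 \<Rightarrow> real" where
  "E_variation_density F F' \<phi> e p = (\<Sum>i\<in>UNIV. E_variation_term F F' \<phi> e i p)"

lemma W_density_deriv_eq_variation_density:
  assumes p: "p \<in> U"
  shows "W_density_deriv F F' (pd 1 \<Phi> p) (pd 2 \<Phi> p) (hess p) (pd 1 \<phi> p *\<^sub>R e) (pd 2 \<phi> p *\<^sub>R e)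
      (\<lambda>i j. pd i (pd j \<phi>) p *\<^sub>R e) = W_variation_density F F' \<phi> e p"
proof -
  interpret conformal_frame "pd 1 \<Phi> p" "pd 2 \<Phi> p" "E p" using conformal_frame_at[OF p] .
  have H: "mcurv_coeffs (pd 1 \<Phi> p \<bullet> pd 1 \<Phi> p) (pd 1 \<Phi> p \<bullet> pd 2 \<Phi> p) (pd 2 \<Phi> p \<bullet> pd 2 \<Phi> p)
     (hess p 1 1 \<bullet> cross3 (pd 1 \<Phi> p) (pd 2 \<Phi> p)) (hess p 1 2 \<bullet> cross3 (pd 1 \<Phi> p) (pd 2 \<Phi> p))
     (hess p 2 1 \<bullet> cross3 (pd 1 \<Phi> p) (pd 2 \<Phi> p)) (hess p 2 2 \<bullet> cross3 (pd 1 \<Phi> p) (pd 2 \<Phi> p))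
     (norm (cross3 (pd 1 \<Phi> p) (pd 2 \<Phi> p))) = mcurv \<Phi> p"
    using mcurv_eq_mcurv_jet[OF cross3_pd_nonzero[OF p]] by (simp add: mcurv_jet_eq_coeffs)
  have two_E: "2 * E p \<noteq> 0" by simp
  note H' = eq_divide_imp[OF _ mcurv_deriv_in_frame[OF frame_decomp[of e] hess_in_frame(1)[OF p] hess_in_frame(2-8)[OF p],
      of "pd 1 \<phi> p" "pd 2 \<phi> p" "\<lambda>i j. pd i (pd j \<phi>) p"]]
  show ?thesis
    unfolding W_density_deriv_def Let_def H H'[OF two_E]
    unfolding area_deriv_in_frame[OF frame_decomp[of e]]
    unfolding norm_cross3_XY W_variation_density_def
      nrm_eq_frame_normal[OF p] weingarten[OF p]
    using E_pos by (simp add: field_simps)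
qed

lemma E_density_deriv_eq_variation_density:
  assumes p: "p \<in> U" and \<phi>: "smooth_on UNIV \<phi>"
  shows "E_density_deriv F F' (pd 1 \<Phi> p) (pd 2 \<Phi> p) (hess p) (pd 1 \<phi> p *\<^sub>R e) (pd 2 \<phi> p *\<^sub>R e)
      (\<lambda>i j. pd i (pd j \<phi>) p *\<^sub>R e) = E_variation_density F F' \<phi> e p"
proof -
  interpret conformal_frame "pd 1 \<Phi> p" "pd 2 \<Phi> p" "E p" using conformal_frame_at[OF p] .
  have A: "sqA_coeffs (pd 1 \<Phi> p \<bullet> pd 1 \<Phi> p) (pd 1 \<Phi> p \<bullet> pd 2 \<Phi> p) (pd 2 \<Phi> p \<bullet> pd 2 \<Phi> p)
     (\<lambda>i j. hess p i j \<bullet> cross3 (pd 1 \<Phi> p) (pd 2 \<Phi> p))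
     (cross3 (pd 1 \<Phi> p) (pd 2 \<Phi> p) \<bullet> cross3 (pd 1 \<Phi> p) (pd 2 \<Phi> p)) = sqA \<Phi> p"
    using sqA_eq_sqA_jet[OF cross3_pd_nonzero[OF p]] by (simp add: sqA_jet_eq_coeffs)
  have \<phi>_sym: "(\<lambda>i j. pd i (pd j \<phi>) p) 2 1 = (\<lambda>i j. pd i (pd j \<phi>) p) 1 2"
    using pd_commute_smooth[OF open_UNIV \<phi>] by simp
  note A' = eq_divide_imp[OF _ sqA_deriv_in_frame[OF frame_decomp[of e] hess_in_frame(1)[OF p] hess_in_frame(2-8)[OF p]
      \<phi>_sym, of "pd 1 \<phi> p" "pd 2 \<phi> p"]]
  show ?thesis
    unfolding E_density_deriv_def Let_def A A'[OF exp_not_eq_zero]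
    unfolding area_deriv_in_frame[OF frame_decomp[of e]]
    unfolding norm_cross3_XY E_variation_density_def E_variation_term_def
      nrm_eq_frame_normal[OF p] weingarten[OF p]
    using E_pos by (simp add: field_simps sum_2)
qed

section \<open>The divergences as distributions\<close>

context
  fixes F F' :: "real \<Rightarrow> real" and \<phi> :: "real^2 \<Rightarrow> real" and K :: "(real^2) set"
  assumes F: "\<And>s. (F has_real_derivative F' s) (at s)" and F': "continuous_on UNIV F'"
    and \<phi>: "smooth_on UNIV \<phi>" and K: "compact K" "K \<subseteq> U" and \<phi>_0: "\<And>p. p \<notin> K \<Longrightarrow> \<phi> p = 0"
begin

lemma continuous_on_F: "continuous_on UNIV F"
  using F by (meson DERIV_isCont continuous_at_imp_continuous_on)

lemma differentiable_pd_test: "pd i \<phi> differentiable at p"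
  using smooth_on_imp_differentiable[OF smooth_on_pd[OF \<phi>]] by simp

lemma continuous_on_pd_test: "continuous_on S (pd i \<phi>)"
  using smooth_on_imp_continuous_on[OF smooth_on_pd[OF \<phi>]] continuous_on_subset by blast

lemma continuous_on_pd_pd_test: "continuous_on S (pd i (pd j \<phi>))"
  using smooth_on_imp_continuous_on[OF smooth_on_pd[OF smooth_on_pd[OF \<phi>]]] continuous_on_subset by blast

lemma pd_test_eq_0: "p \<notin> K \<Longrightarrow> pd i \<phi> p = 0"
  using pd_eq_0_outside_compact[OF K(1) _ \<phi>_0] .

lemma continuous_on_compact_support: "continuous_on U g \<Longrightarrow> continuous_on K g"
  using continuous_on_subset K(2) by blast

lemma div_W_term:
  defines "f \<equiv> \<lambda>p. mcurv \<Phi> p * F' ((mcurv \<Phi> p)\<^sup>2)"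
  shows "dpd i (\<lambda>\<psi>. regd U (\<lambda>p. F ((mcurv \<Phi> p)\<^sup>2) *\<^sub>R pd i \<Phi> p + f p *\<^sub>R pd i (nrm \<Phi>) p) \<psi>
        - vmul (nrm \<Phi>) (dpd i (regd U f)) \<psi>) \<phi> $ c
    = - integral K (\<lambda>p. pd i \<phi> p * (F ((mcurv \<Phi> p)\<^sup>2) * pd i \<Phi> p $ c + f p * pd i (nrm \<Phi>) p $ c)
        + (nrm \<Phi> p $ c * pd i (pd i \<phi>) p + pd i (nrm \<Phi>) p $ c * pd i \<phi> p) * f p)"
proof -
  have cf: "continuous_on U f"
    unfolding f_def by (intro continuous_intros continuous_on_compose_UNIV[OF F'] continuous_on_mcurv)
  have cFH: "continuous_on U (\<lambda>p. F ((mcurv \<Phi> p)\<^sup>2))"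
    by (intro continuous_intros continuous_on_compose_UNIV[OF continuous_on_F] continuous_on_mcurv)
  define g1 where "g1 p = pd i \<phi> p *\<^sub>R (F ((mcurv \<Phi> p)\<^sup>2) *\<^sub>R pd i \<Phi> p + f p *\<^sub>R pd i (nrm \<Phi>) p)" for p
  define g2 where "g2 p = pd i (\<lambda>q. nrm \<Phi> q $ c * pd i \<phi> q) p * f p" for p
  have g2_U: "g2 p = (nrm \<Phi> p $ c * pd i (pd i \<phi>) p + pd i (nrm \<Phi>) p $ c * pd i \<phi> p) * f p"
    if "p \<in> U" for p
    unfolding g2_def
    using pd_mult[OF differentiable_vec_nth[OF differentiable_nrm[OF that]] differentiable_pd_test, of i c]
      pd_vec_nth[OF differentiable_nrm[OF that]] by simp
  have cg1: "continuous_on K g1" unfolding g1_def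
    by (intro continuous_intros continuous_on_pd_test continuous_on_compact_support cFH cf
        continuous_on_pd continuous_on_pd_nrm)
  have "continuous_on K (\<lambda>p. (nrm \<Phi> p $ c * pd i (pd i \<phi>) p + pd i (nrm \<Phi>) p $ c * pd i \<phi> p) * f p)"
    by (intro continuous_intros continuous_on_pd_test continuous_on_pd_pd_test continuous_on_compact_support
        continuous_on_nrm cf continuous_on_pd_nrm)
  then have cg2: "continuous_on K g2" using g2_U K(2) by (metis (no_types, lifting) continuous_on_cong subsetD)
  have g1_0: "g1 p = 0" and g2_0: "g2 p = 0" if "p \<notin> K" for p
    using pd_test_eq_0[OF that] pd_eq_0_outside_compact[OF K(1) that, of "\<lambda>q. nrm \<Phi> q $ c * pd i \<phi> q"]
      pd_test_eq_0 by (auto simp: g1_def g2_def)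
  have "dpd i (\<lambda>\<psi>. regd U (\<lambda>p. F ((mcurv \<Phi> p)\<^sup>2) *\<^sub>R pd i \<Phi> p + f p *\<^sub>R pd i (nrm \<Phi>) p) \<psi>
        - vmul (nrm \<Phi>) (dpd i (regd U f)) \<psi>) \<phi> $ c = - (integral U g1 $ c + integral U g2)"
    by (simp add: dpd_def regd_def vmul_def g1_def[abs_def] g2_def[abs_def])
  also have "\<dots> = - (integral K (\<lambda>p. g1 p $ c) + integral K g2)"
    using integral_vec_nth_compact_support[OF K cg1 g1_0] integral_compact_support[OF K cg2 g2_0] by simp
  also have "\<dots> = - integral K (\<lambda>p. g1 p $ c + g2 p)"
    using cg1 cg2 by (subst integral_add) (auto intro!: integrable_continuous_on_compact[OF K(1)] continuous_intros)
  also have "\<dots> = - integral K (\<lambda>p. pd i \<phi> p * (F ((mcurv \<Phi> p)\<^sup>2) * pd i \<Phi> p $ c + f p * pd i (nrm \<Phi>) p $ c)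
        + (nrm \<Phi> p $ c * pd i (pd i \<phi>) p + pd i (nrm \<Phi>) p $ c * pd i \<phi> p) * f p)"
    using K(2) by (intro arg_cong[where f=uminus] integral_cong) (auto simp: g1_def g2_U)
  finally show ?thesis .
qed

lemma div_W_eq_integral: "div_W U F F' \<Phi> \<phi> $ c = - integral K (W_variation_density F F' \<phi> (axis c 1))"
proof -
  define f where "f p = mcurv \<Phi> p * F' ((mcurv \<Phi> p)\<^sup>2)" for p
  define T where "T i = (\<lambda>p. pd i \<phi> p * (F ((mcurv \<Phi> p)\<^sup>2) * pd i \<Phi> p $ c + f p * pd i (nrm \<Phi>) p $ c)
      + (nrm \<Phi> p $ c * pd i (pd i \<phi>) p + pd i (nrm \<Phi>) p $ c * pd i \<phi> p) * f p)" for i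
  have cT: "continuous_on K (T i)" for i
    unfolding T_def f_def
    by (intro continuous_intros continuous_on_pd_test continuous_on_pd_pd_test continuous_on_compact_support
        continuous_on_compose_UNIV[OF continuous_on_F] continuous_on_compose_UNIV[OF F']
        continuous_on_mcurv continuous_on_pd continuous_on_nrm continuous_on_pd_nrm)
  have "div_W U F F' \<Phi> \<phi> $ c = (\<Sum>i\<in>UNIV. - integral K (T i))"
    unfolding div_W_def Let_def using div_W_term[of i c for i] by (simp add: T_def f_def[abs_def])
  also have "\<dots> = - integral K (\<lambda>p. T 1 p + T 2 p)"
    using integral_add[OF integrable_continuous_on_compact[OF K(1) cT] integrable_continuous_on_compact[OF K(1) cT]]
    by (simp add: sum_2)
  also have "\<dots> = - integral K (W_variation_density F F' \<phi> (axis c 1))"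
    by (intro arg_cong[where f=uminus] integral_cong)
      (simp add: T_def f_def W_variation_density_def inner_axis algebra_simps)
  finally show ?thesis .
qed

lemma div_E_unfold:
  "dpd i (\<lambda>\<psi>. regd U (\<lambda>p. F (sqA \<Phi> p) *\<^sub>R pd i \<Phi> p
       - (2 * exp (-2 * lam p) * F' (sqA \<Phi> p)) *\<^sub>R (\<Sum>j\<in>UNIV. (pd i (nrm \<Phi>) p \<bullet> pd j (nrm \<Phi>) p) *\<^sub>R pd j \<Phi> p)) \<psi>
     + vmul (\<lambda>p. (2 * exp (-2 * lam p)) *\<^sub>R nrm \<Phi> p)
         (vdot (\<lambda>\<omega>. \<Sum>k\<in>UNIV. dpd k (regd U (\<lambda>p. F' (sqA \<Phi> p) *\<^sub>R pd k (nrm \<Phi>) p)) \<omega>) (pd i \<Phi>)) \<psi>) \<phi> $ c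
   = - (integral U (\<lambda>p. pd i \<phi> p *\<^sub>R (F (sqA \<Phi> p) *\<^sub>R pd i \<Phi> p
       - (2 * exp (-2 * lam p) * F' (sqA \<Phi> p)) *\<^sub>R (\<Sum>j\<in>UNIV. (pd i (nrm \<Phi>) p \<bullet> pd j (nrm \<Phi>) p) *\<^sub>R pd j \<Phi> p))) $ c
     - (\<Sum>d\<in>UNIV. \<Sum>k\<in>UNIV. integral U (\<lambda>p. pd k (\<lambda>q. pd i \<Phi> q $ d * (2 * exp (-2 * lam q) * nrm \<Phi> q $ c * pd i \<phi> q)) p
          *\<^sub>R (F' (sqA \<Phi> p) *\<^sub>R pd k (nrm \<Phi>) p)) $ d))"
  by (simp add: dpd_def regd_def vmul_def vdot_def sum_negf)

text \<open>Since \<open>\<lambda>\<close> is not assumed differentiable, \<open>e\<^sup>-\<^sup>2\<^sup>\<lambda> = 1 / |\<Phi>\<^sub>1|\<^sup>2\<close> is differentiated through \<open>\<Phi>\<close>.\<close>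

lemma pd_div_E_coefficient:
  assumes p: "p \<in> U"
  shows "pd k (\<lambda>q. pd i \<Phi> q $ d * (2 * exp (-2 * lam q) * nrm \<Phi> q $ c * pd i \<phi> q)) p
    = hess p k i $ d * (2 / E p * (nrm \<Phi> p $ c * pd i \<phi> p))
      + pd i \<Phi> p $ d * (2 * (- (2 * (pd 1 \<Phi> p \<bullet> hess p k 1)) / (E p * E p) * (nrm \<Phi> p $ c) * pd i \<phi> p
            + (1 / E p) * ((pd k (nrm \<Phi>) p $ c) * pd i \<phi> p + (nrm \<Phi> p $ c) * pd k (pd i \<phi>) p)))"
proof -
  define chi where "chi q = 2 / (pd 1 \<Phi> q \<bullet> pd 1 \<Phi> q) * (nrm \<Phi> q $ c * pd i \<phi> q)" for q
  have XX: "(\<lambda>q. pd 1 \<Phi> q \<bullet> pd 1 \<Phi> q) differentiable at p" "pd 1 \<Phi> p \<bullet> pd 1 \<Phi> p \<noteq> 0"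
    using differentiable_pd[OF p] inner_pd_self[OF p] by auto
  have n_c: "(\<lambda>q. nrm \<Phi> q $ c) differentiable at p"
    using differentiable_vec_nth[OF differentiable_nrm[OF p]] .
  have d_inv: "(\<lambda>q. 2 / (pd 1 \<Phi> q \<bullet> pd 1 \<Phi> q)) differentiable at p"
    using XX by (auto intro!: derivative_intros)
  have pd_inv: "pd k (\<lambda>q. 2 / (pd 1 \<Phi> q \<bullet> pd 1 \<Phi> q)) p
      = (- 2 / (pd 1 \<Phi> p \<bullet> pd 1 \<Phi> p)^2) * pd k (\<lambda>q. pd 1 \<Phi> q \<bullet> pd 1 \<Phi> q) p"
    by (rule pd_chain[OF XX(1)]) (use XX(2) in \<open>auto intro!: derivative_eq_intros simp: power2_eq_square\<close>)
  have pd_XX: "pd k (\<lambda>q. pd 1 \<Phi> q \<bullet> pd 1 \<Phi> q) p = 2 * (pd 1 \<Phi> p \<bullet> hess p k 1)"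
    using pd_inner[OF differentiable_pd[OF p] differentiable_pd[OF p], of k] by (simp add: inner_commute)
  have pd_n\<phi>: "pd k (\<lambda>q. nrm \<Phi> q $ c * pd i \<phi> q) p = nrm \<Phi> p $ c * pd k (pd i \<phi>) p + pd k (nrm \<Phi>) p $ c * pd i \<phi> p"
    using pd_mult[OF n_c differentiable_pd_test, of k] pd_vec_nth[OF differentiable_nrm[OF p]] by simp
  have pd_chi: "pd k chi p = 2 * (- (2 * (pd 1 \<Phi> p \<bullet> hess p k 1)) / (E p * E p) * (nrm \<Phi> p $ c) * pd i \<phi> p
            + (1 / E p) * ((pd k (nrm \<Phi>) p $ c) * pd i \<phi> p + (nrm \<Phi> p $ c) * pd k (pd i \<phi>) p))"
    unfolding chi_def pd_mult[OF d_inv differentiable_mult[OF n_c differentiable_pd_test]] pd_inv pd_XX pd_n\<phi>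
    using inner_pd_self[OF p] by (simp add: field_simps power2_eq_square)
  have chi_diff: "chi differentiable at p"
    unfolding chi_def using d_inv n_c differentiable_pd_test by (intro differentiable_mult)
  have "pd k (\<lambda>q. pd i \<Phi> q $ d * (2 * exp (-2 * lam q) * nrm \<Phi> q $ c * pd i \<phi> q)) p
      = pd k (\<lambda>q. pd i \<Phi> q $ d * chi q) p"
    by (rule pd_cong_open[OF open_U p]) (simp add: chi_def inner_pd_self exp_minus field_simps)
  also have "\<dots> = pd i \<Phi> p $ d * pd k chi p + pd k (pd i \<Phi>) p $ d * chi p"
    using pd_mult[OF differentiable_vec_nth[OF differentiable_pd[OF p]] chi_diff]
      pd_vec_nth[OF differentiable_pd[OF p]] by simp
  finally show ?thesis unfolding pd_chi chi_def inner_pd_self[OF p] by (simp add: algebra_simps)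
qed

lemma continuous_on_pd_div_E_coefficient:
  "continuous_on U (\<lambda>p. pd k (\<lambda>q. pd i \<Phi> q $ d * (2 * exp (-2 * lam q) * nrm \<Phi> q $ c * pd i \<phi> q)) p)"
proof -
  have "continuous_on U (\<lambda>p. hess p k i $ d * (2 / E p * (nrm \<Phi> p $ c * pd i \<phi> p))
      + pd i \<Phi> p $ d * (2 * (- (2 * (pd 1 \<Phi> p \<bullet> hess p k 1)) / (E p * E p) * (nrm \<Phi> p $ c) * pd i \<phi> p
            + (1 / E p) * ((pd k (nrm \<Phi>) p $ c) * pd i \<phi> p + (nrm \<Phi> p $ c) * pd k (pd i \<phi>) p))))"
    by (intro continuous_intros continuous_on_pd continuous_on_pd_pd continuous_on_nrm continuous_on_pd_nrm
        continuous_on_E continuous_on_pd_test continuous_on_pd_pd_test) auto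
  then show ?thesis using pd_div_E_coefficient by (metis (no_types, lifting) continuous_on_cong)
qed

lemma div_E_integrand:
  assumes p: "p \<in> U"
  shows "(pd i \<phi> p *\<^sub>R (F (sqA \<Phi> p) *\<^sub>R pd i \<Phi> p
       - (2 * exp (-2 * lam p) * F' (sqA \<Phi> p)) *\<^sub>R (\<Sum>j\<in>UNIV. (pd i (nrm \<Phi>) p \<bullet> pd j (nrm \<Phi>) p) *\<^sub>R pd j \<Phi> p))) $ c
    - (\<Sum>d\<in>UNIV. \<Sum>k\<in>UNIV. (pd k (\<lambda>q. pd i \<Phi> q $ d * (2 * exp (-2 * lam q) * nrm \<Phi> q $ c * pd i \<phi> q)) p
          *\<^sub>R (F' (sqA \<Phi> p) *\<^sub>R pd k (nrm \<Phi>) p)) $ d)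
    = E_variation_term F F' \<phi> (axis c 1) i p"
proof -
  define chi where "chi = 2 / E p * (nrm \<Phi> p $ c * pd i \<phi> p)"
  define dchi where "dchi k = 2 * (- (2 * (pd 1 \<Phi> p \<bullet> hess p k 1)) / (E p * E p) * (nrm \<Phi> p $ c) * pd i \<phi> p
          + (1 / E p) * ((pd k (nrm \<Phi>) p $ c) * pd i \<phi> p + (nrm \<Phi> p $ c) * pd k (pd i \<phi>) p))" for k
  have coeff: "pd k (\<lambda>q. pd i \<Phi> q $ d * (2 * exp (-2 * lam q) * nrm \<Phi> q $ c * pd i \<phi> q)) p
      = hess p k i $ d * chi + pd i \<Phi> p $ d * dchi k" for k d
    unfolding chi_def dchi_def by (rule pd_div_E_coefficient[OF p])
  have "(\<Sum>d\<in>UNIV. \<Sum>k\<in>UNIV. (pd k (\<lambda>q. pd i \<Phi> q $ d * (2 * exp (-2 * lam q) * nrm \<Phi> q $ c * pd i \<phi> q)) p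
          *\<^sub>R (F' (sqA \<Phi> p) *\<^sub>R pd k (nrm \<Phi>) p)) $ d)
      = (\<Sum>k\<in>UNIV. \<Sum>d\<in>UNIV. ((hess p k i $ d * chi + pd i \<Phi> p $ d * dchi k)
          *\<^sub>R (F' (sqA \<Phi> p) *\<^sub>R pd k (nrm \<Phi>) p)) $ d)"
    unfolding coeff by (rule sum.swap)
  also have "\<dots> = (\<Sum>k\<in>UNIV. F' (sqA \<Phi> p) * (chi * (pd k (nrm \<Phi>) p \<bullet> hess p k i)
      + dchi k * (pd k (nrm \<Phi>) p \<bullet> pd i \<Phi> p)))"
    by (simp add: inner_vec_def sum_3 algebra_simps)
  finally have h_sum: "(\<Sum>d\<in>UNIV. \<Sum>k\<in>UNIV. (pd k (\<lambda>q. pd i \<Phi> q $ d * (2 * exp (-2 * lam q) * nrm \<Phi> q $ c * pd i \<phi> q)) p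
          *\<^sub>R (F' (sqA \<Phi> p) *\<^sub>R pd k (nrm \<Phi>) p)) $ d) = \<dots>" .
  have g_c: "(pd i \<phi> p *\<^sub>R (F (sqA \<Phi> p) *\<^sub>R pd i \<Phi> p
       - (2 * exp (-2 * lam p) * F' (sqA \<Phi> p)) *\<^sub>R (\<Sum>j\<in>UNIV. (pd i (nrm \<Phi>) p \<bullet> pd j (nrm \<Phi>) p) *\<^sub>R pd j \<Phi> p))) $ c
      = pd i \<phi> p * (F (sqA \<Phi> p) * (pd i \<Phi> p $ c)
        - (2 / E p) * F' (sqA \<Phi> p) * (\<Sum>j\<in>UNIV. (pd i (nrm \<Phi>) p \<bullet> pd j (nrm \<Phi>) p) * (pd j \<Phi> p $ c)))"
    by (simp add: exp_minus sum_distrib_left field_simps)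
  show ?thesis
    unfolding h_sum g_c E_variation_term_def inner_axis chi_def dchi_def
    by (simp add: sum_distrib_left algebra_simps)
qed

lemma div_E_term:
  "dpd i (\<lambda>\<psi>. regd U (\<lambda>p. F (sqA \<Phi> p) *\<^sub>R pd i \<Phi> p
       - (2 * exp (-2 * lam p) * F' (sqA \<Phi> p)) *\<^sub>R (\<Sum>j\<in>UNIV. (pd i (nrm \<Phi>) p \<bullet> pd j (nrm \<Phi>) p) *\<^sub>R pd j \<Phi> p)) \<psi>
     + vmul (\<lambda>p. (2 * exp (-2 * lam p)) *\<^sub>R nrm \<Phi> p)
         (vdot (\<lambda>\<omega>. \<Sum>k\<in>UNIV. dpd k (regd U (\<lambda>p. F' (sqA \<Phi> p) *\<^sub>R pd k (nrm \<Phi>) p)) \<omega>) (pd i \<Phi>)) \<psi>) \<phi> $ c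
   = - integral K (E_variation_term F F' \<phi> (axis c 1) i)"
proof -
  have cA: "continuous_on U (\<lambda>p. F (sqA \<Phi> p))" "continuous_on U (\<lambda>p. F' (sqA \<Phi> p))"
    by (intro continuous_on_compose_UNIV[OF continuous_on_F] continuous_on_compose_UNIV[OF F'] continuous_on_sqA)+
  have cE: "continuous_on U (\<lambda>p. exp (-2 * lam p))"
    using continuous_on_E by (auto intro!: continuous_intros simp: exp_minus field_simps)
  define g where "g p = pd i \<phi> p *\<^sub>R (F (sqA \<Phi> p) *\<^sub>R pd i \<Phi> p
       - (2 * exp (-2 * lam p) * F' (sqA \<Phi> p)) *\<^sub>R (\<Sum>j\<in>UNIV. (pd i (nrm \<Phi>) p \<bullet> pd j (nrm \<Phi>) p) *\<^sub>R pd j \<Phi> p))" for p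
  define h where "h d k p = pd k (\<lambda>q. pd i \<Phi> q $ d * (2 * exp (-2 * lam q) * nrm \<Phi> q $ c * pd i \<phi> q)) p
      *\<^sub>R (F' (sqA \<Phi> p) *\<^sub>R pd k (nrm \<Phi>) p)" for d k p
  have cg: "continuous_on K g" unfolding g_def
    by (intro continuous_intros continuous_on_pd_test continuous_on_compact_support cA cE
        continuous_on_pd_nrm continuous_on_pd)
  have ch: "continuous_on K (h d k)" for d k unfolding h_def
    by (intro continuous_intros continuous_on_compact_support cA continuous_on_pd_nrm
        continuous_on_pd_div_E_coefficient)
  have g_0: "g p = 0" if "p \<notin> K" for p unfolding g_def using pd_test_eq_0[OF that] by simp
  have h_0: "h d k p = 0" if "p \<notin> K" for d k p
  proof -
    have "pd k (\<lambda>q. pd i \<Phi> q $ d * (2 * exp (-2 * lam q) * nrm \<Phi> q $ c * pd i \<phi> q)) p = 0"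
      by (rule pd_eq_0_outside_compact[OF K(1) that]) (simp add: pd_test_eq_0)
    then show ?thesis by (simp add: h_def)
  qed
  have "integral U g $ c - (\<Sum>d\<in>UNIV. \<Sum>k\<in>UNIV. integral U (h d k) $ d)
      = integral K (\<lambda>p. g p $ c - (\<Sum>d\<in>UNIV. \<Sum>k\<in>UNIV. h d k p $ d))"
    by (rule integral_vec_nth_diff_sum_compact_support[OF K cg ch g_0 h_0])
  also have "\<dots> = integral K (E_variation_term F F' \<phi> (axis c 1) i)"
  proof (rule integral_cong)
    fix p assume "p \<in> K"
    then have "p \<in> U" using K(2) by auto
    then show "g p $ c - (\<Sum>d\<in>UNIV. \<Sum>k\<in>UNIV. h d k p $ d) = E_variation_term F F' \<phi> (axis c 1) i p"
      unfolding g_def h_def by (rule div_E_integrand)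
  qed
  finally show ?thesis unfolding div_E_unfold g_def[symmetric] h_def[symmetric] by simp
qed

lemma div_E_eq_integral: "div_E U F F' \<Phi> lam \<phi> $ c = - integral K (E_variation_density F F' \<phi> (axis c 1))"
proof -
  define T where "T i = E_variation_term F F' \<phi> (axis c 1) i" for i
  have "continuous_on U (T i)" for i
    unfolding T_def E_variation_term_def
    by (intro continuous_on_E continuous_on_pd continuous_on_pd_pd continuous_on_nrm continuous_on_pd_nrm
        continuous_on_compose_UNIV[OF continuous_on_F continuous_on_sqA]
        continuous_on_compose_UNIV[OF F' continuous_on_sqA]
        continuous_on_pd_test continuous_on_pd_pd_test continuous_intros) auto
  then have cT: "continuous_on K (T i)" for i by (rule continuous_on_compact_support)
  have "div_E U F F' \<Phi> lam \<phi> $ c = (\<Sum>i\<in>UNIV. - integral K (T i))"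
    unfolding div_E_def Let_def sum_component T_def using div_E_term by simp
  also have "\<dots> = - integral K (\<lambda>p. T 1 p + T 2 p)"
    using integral_add[OF integrable_continuous_on_compact[OF K(1) cT] integrable_continuous_on_compact[OF K(1) cT]]
    by (simp add: sum_2)
  also have "\<dots> = - integral K (E_variation_density F F' \<phi> (axis c 1))"
    by (simp add: T_def E_variation_density_def[abs_def] sum_2)
  finally show ?thesis .
qed

end

section \<open>The Euler-Lagrange equations\<close>

context
  fixes F F' :: "real \<Rightarrow> real"
  assumes F: "\<And>s. (F has_real_derivative F' s) (at s)" and F': "continuous_on UNIV F'"
begin

lemma div_W_eq_0_if_critical:
  assumes crit: "critical (WF F) U \<Phi>" and "test_fn U \<phi>"
  shows "div_W U F F' \<Phi> \<phi> = 0"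
proof -
  obtain K where K: "compact K" "K \<subseteq> U" and \<phi>_0: "\<And>p. p \<notin> K \<Longrightarrow> \<phi> p = 0" and \<phi>: "smooth_on UNIV \<phi>"
    using \<open>test_fn U \<phi>\<close> unfolding test_fn_def by blast
  have "div_W U F F' \<Phi> \<phi> $ c = 0" for c
  proof -
    have "integral K (W_variation_density F F' \<phi> (axis c 1))
        = integral K (\<lambda>p. W_density_deriv F F' (pd 1 \<Phi> p) (pd 2 \<Phi> p) (hess p)
            (pd 1 \<phi> p *\<^sub>R axis c 1) (pd 2 \<phi> p *\<^sub>R axis c 1) (\<lambda>i j. pd i (pd j \<phi>) p *\<^sub>R axis c 1))"
      using K(2) by (intro integral_cong) (auto simp: W_density_deriv_eq_variation_density)
    also have "\<dots> = 0"
      by (rule critical_imp_deriv_eq_0[OF crit \<phi> K \<phi>_0 has_real_derivative_WF_variation[OF F F' \<phi> K]])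
    finally show ?thesis using div_W_eq_integral[OF F F' \<phi> K \<phi>_0] by simp
  qed
  then show ?thesis by (simp add: vec_eq_iff)
qed

lemma div_E_eq_0_if_critical:
  assumes crit: "critical (EF F) U \<Phi>" and "test_fn U \<phi>"
  shows "div_E U F F' \<Phi> lam \<phi> = 0"
proof -
  obtain K where K: "compact K" "K \<subseteq> U" and \<phi>_0: "\<And>p. p \<notin> K \<Longrightarrow> \<phi> p = 0" and \<phi>: "smooth_on UNIV \<phi>"
    using \<open>test_fn U \<phi>\<close> unfolding test_fn_def by blast
  have "div_E U F F' \<Phi> lam \<phi> $ c = 0" for c
  proof -
    have "integral K (E_variation_density F F' \<phi> (axis c 1))
        = integral K (\<lambda>p. E_density_deriv F F' (pd 1 \<Phi> p) (pd 2 \<Phi> p) (hess p)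
            (pd 1 \<phi> p *\<^sub>R axis c 1) (pd 2 \<phi> p *\<^sub>R axis c 1) (\<lambda>i j. pd i (pd j \<phi>) p *\<^sub>R axis c 1))"
      using K(2) by (intro integral_cong) (auto simp: E_density_deriv_eq_variation_density[OF _ \<phi>])
    also have "\<dots> = 0"
      by (rule critical_imp_deriv_eq_0[OF crit \<phi> K \<phi>_0 has_real_derivative_EF_variation[OF F F' \<phi> K]])
    finally show ?thesis using div_E_eq_integral[OF F F' \<phi> K \<phi>_0] by simp
  qed
  then show ?thesis by (simp add: vec_eq_iff)
qed

end

end

theorem proposition2p1:
  fixes U :: "(real^2) set" and \<Phi> :: "real^2 \<Rightarrow> real^3" and lam :: "real^2 \<Rightarrow> real"
    and F F' :: "real \<Rightarrow> real"
  assumes "open U" and "connected U"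
    and "\<And>s. (F has_real_derivative F' s) (at s)" and "continuous_on UNIV F'"
    and "smooth_on U \<Phi>"
    and "\<And>p i j. p \<in> U \<Longrightarrow> pd i \<Phi> p \<bullet> pd j \<Phi> p = (if i = j then exp (2 * lam p) else 0)"
  shows "(critical (WF F) U \<Phi> \<longrightarrow> (\<forall>\<phi>. test_fn U \<phi> \<longrightarrow> div_W U F F' \<Phi> \<phi> = 0))
       \<and> (critical (EF F) U \<Phi> \<longrightarrow> (\<forall>\<phi>. test_fn U \<phi> \<longrightarrow> div_E U F F' \<Phi> lam \<phi> = 0))"
proof -
  interpret conformal_immersion U \<Phi> lam
    using assms(1,5,6) by unfold_locales auto
  show ?thesis
    using div_W_eq_0_if_critical[OF assms(3,4)] div_E_eq_0_if_critical[OF assms(3,4)] by blast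
qed

end
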